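(* Let $\gamma\in(0,1)$, let $\phi(z)=\max\{z,\gamma z\}$, let $m_1,m_2\ge 1$, $m=m_1+m_2$, and consider the network $$f(x;W)=\sum_{j=1}^{m_1}\frac{1}{\sqrt m}\phi(v_j^\top x)-\sum_{j=1}^{m_2}\frac{1}{\sqrt m}\phi(u_j^\top x),$$ where $W\in\mathbb{R}^{m\times d}$ has rows $v_1,\dots,v_{m_1},u_1,\dots,u_{m_2}$. Let $\{(x_i,y_i)\}_{i=1}^n\subseteq\mathbb{R}^d\times\{\pm1\}$, $R_{\max}=\max_i\|x_i\|$, $R_{\min}=\min_i\|x_i\|$, $R=R_{\max}/R_{\min}$, $I=[n]$, $I_+=\{i:y_i=1\}$, $I_-=\{i:y_i=-1\}$, and assume $$R_{\min}^2\ \ge\ 3\gamma^{-3}R^2\,n\,\max_{i\neq j}|\langle x_i,x_j\rangle|.$$ Let $W$ be a KKT point of the problem $$(\mathrm{P})\qquad \min_W \tfrac12\|W\|_F^2\quad\text{s.t.}\quad y_i f(x_i;W)\ge 1\ \ \forall i\in[n].$$ Then: 1. $y_if(x_i;W)=1$ for all $i\in I$. 2. There exist $v,u\in\mathbb{R}^d$ with $v=v_1=\dots=v_{m_1}$ and $u=u_1=\dots=u_{m_2}$; hence $\mathrm{rank}(W)\le 2$. 3. There exist $\lambda_i\in\left(\frac{1}{2R_{\max}^2},\frac{3}{2\gamma^2R_{\min}^2}\right)$, $i\in I$, such that $v=\frac{1}{\sqrt m}\sum_{i\in I_+}\lambda_ix_i-\frac{\gamma}{\sqrt m}\sum_{i\in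 I_-}\lambda_ix_i$ and $u=\frac{1}{\sqrt m}\sum_{i\in I_-}\lambda_ix_i-\frac{\gamma}{\sqrt m}\sum_{i\in I_+}\lambda_ix_i$. Moreover $y_iv^\top x_i>0$ and $y_iu^\top x_i<0$ for all $i\in I$. 4. $W$ is a global optimum of (P), and (P) has a unique global optimum. 5. The pair $(v,u)$ is the (unique) global optimum of the convex problem $$\min_{v,u\in\mathbb{R}^d}\tfrac{m_1}{2}\|v\|^2+\tfrac{m_2}{2}\|u\|^2\ \text{ s.t. }\ \tfrac{m_1}{\sqrt m}v^\top x_i-\gamma\tfrac{m_2}{\sqrt m}u^\top x_i\ge1\ (i\in I_+),\ \ \tfrac{m_2}{\sqrt m}u^\top x_i-\gamma\tfrac{m_1}{\sqrt m}v^\top x_i\ge1\ (i\in I_-).$$ 6. With $z=\frac{m_1}{\sqrt m}v-\frac{m_2}{\sqrt m}u$, for every $x\in\mathbb{R}^d$, $\mathrm{sign}(f(x;W))=\mathrm{sign}(z^\top x)$. 7. For all $i\in I$, $y_iz^\top x_i\ge1$, and $\|z\|\le\frac{2}{\kappa+\gamma}\|z^*\|$, where $\kappa=\sqrt{\min\{m_1,m_2\}/\max\{m_1,m_2\}}$ and $z^*=\arg\min_{\tilde z}\|\tilde z\|$ subject to $y_i\tilde z^\top x_i\ge1$ for all $i$. However, $z$ need not be an $\ell_2$-max-margin linear predictor: there is a dataset satisfying the hypotheses (with $\gamma=1/2$, $m_1=m_2$, $d=3$, $n=3$) for which $z$ is not a KKT point of $\min_{\tilde z}\frac12\|\tilde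 z\|^2$ s.t. $y_i\tilde z^\top x_i\ge\beta$ $\forall i$, for any $\beta>0$.
   Context: $\mathrm{sign}(z)=1$ if $z>0$ and $-1$ otherwise. KKT points for nonsmooth problems are defined via the Clarke subdifferential $\partial^\circ f(x)=\mathrm{conv}\{\lim_k\nabla f(x_k): x_k\to x,\ f \text{ differentiable at }x_k\}$: for $\min f(x)$ s.t. $g_n(x)\le0$ ($n\in[N]$), with $f,g_n$ locally Lipschitz, a feasible $x$ is a KKT point if there exist $\lambda_1,\dots,\lambda_N\ge0$ with $0\in\partial^\circ f(x)+\sum_n\lambda_n\partial^\circ g_n(x)$ and $\lambda_ng_n(x)=0$ for all $n$. For (P), the constraints are $g_i(W)=1-y_if(x_i;W)\le0$. *)

theory Defs
  imports "HOL-Analysis.Analysis"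
begin

definition sign :: "real \<Rightarrow> real" where
  "sign z = (if z > 0 then 1 else -1)"

definition leaky :: "real \<Rightarrow> real \<Rightarrow> real" where
  "leaky \<gamma> z = max z (\<gamma> * z)"

text \<open>Parameters W: rows v_1..v_m1 (first component, indexed by 'm1) and
  u_1..u_m2 (second component, indexed by 'm2); m1 = CARD('m1), m2 = CARD('m2).
  The norm of the pair is the Frobenius norm of W.\<close>
definition net :: "real \<Rightarrow> (real^'d^'m1::finite) \<times> (real^'d^'m2::finite) \<Rightarrow> real^'d \<Rightarrow> real" where
  "net \<gamma> W x =
     (\<Sum>j\<in>UNIV. (1 / sqrt (real (CARD('m1) + CARD('m2)))) * leaky \<gamma> ((fst W $ j) \<bullet> x))
   - (\<Sum>j\<in>UNIV. (1 / sqrt (real (CARD('m1) + CARD('m2)))) * leaky \<gamma> ((snd W $ j) \<bullet> x))"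

definition clarke_subdiff :: "('a::euclidean_space \<Rightarrow> real) \<Rightarrow> 'a \<Rightarrow> 'a set" where
  "clarke_subdiff f x = convex hull
     {g. \<exists>xs gs. xs \<longlonglongrightarrow> x \<and>
                 (\<forall>k. (f has_derivative (\<lambda>h. gs k \<bullet> h)) (at (xs k))) \<and>
                 gs \<longlonglongrightarrow> g}"

definition kkt_point :: "('a::euclidean_space \<Rightarrow> real) \<Rightarrow> ('i::finite \<Rightarrow> 'a \<Rightarrow> real) \<Rightarrow> 'a \<Rightarrow> bool" where
  "kkt_point f g x \<longleftrightarrow>
     (\<forall>n. g n x \<le> 0) \<and>
     (\<exists>lam :: 'i \<Rightarrow> real. (\<forall>n. lam n \<ge> 0) \<and> (\<forall>n. lam n * g n x = 0) \<and>
        0 \<in> {a + (\<Sum>n\<in>UNIV. lam n *\<^sub>R b n) | a b.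
                a \<in> clarke_subdiff f x \<and> (\<forall>n. b n \<in> clarke_subdiff (g n) x)})"

definition P_obj :: "(real^'d^'m1::finite) \<times> (real^'d^'m2::finite) \<Rightarrow> real" where
  "P_obj W = (1/2) * (norm W)^2"

definition P_cons :: "real \<Rightarrow> ('n \<Rightarrow> real^'d) \<Rightarrow> ('n \<Rightarrow> real) \<Rightarrow> 'n \<Rightarrow>
     (real^'d^'m1::finite) \<times> (real^'d^'m2::finite) \<Rightarrow> real" where
  "P_cons \<gamma> x y i W = 1 - y i * net \<gamma> W (x i)"

definition P_feasible :: "real \<Rightarrow> ('n \<Rightarrow> real^'d) \<Rightarrow> ('n \<Rightarrow> real) \<Rightarrow>
     (real^'d^'m1::finite) \<times> (real^'d^'m2::finite) \<Rightarrow> bool" where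
  "P_feasible \<gamma> x y W \<longleftrightarrow> (\<forall>i. y i * net \<gamma> W (x i) \<ge> 1)"

definition P_global_opt :: "real \<Rightarrow> ('n \<Rightarrow> real^'d) \<Rightarrow> ('n \<Rightarrow> real) \<Rightarrow>
     (real^'d^'m1::finite) \<times> (real^'d^'m2::finite) \<Rightarrow> bool" where
  "P_global_opt \<gamma> x y W \<longleftrightarrow> P_feasible \<gamma> x y W \<and>
     (\<forall>W' :: (real^'d^'m1) \<times> (real^'d^'m2). P_feasible \<gamma> x y W' \<longrightarrow> P_obj W \<le> P_obj W')"

definition Rmax :: "('n::finite \<Rightarrow> real^'d) \<Rightarrow> real" where
  "Rmax x = Max (range (\<lambda>i. norm (x i)))"

definition Rmin :: "('n::finite \<Rightarrow> real^'d) \<Rightarrow> real" where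
  "Rmin x = Min (range (\<lambda>i. norm (x i)))"

text \<open>Hypotheses on the data set (labels in {+1,-1}, nonzero inputs so that R is
  defined, and near-orthogonality; for n = 1 the max over i ~= j is vacuous).\<close>
definition data_hyp :: "real \<Rightarrow> ('n::finite \<Rightarrow> real^'d) \<Rightarrow> ('n \<Rightarrow> real) \<Rightarrow> bool" where
  "data_hyp \<gamma> x y \<longleftrightarrow>
     (\<forall>i. y i = 1 \<or> y i = -1) \<and> (\<forall>i. x i \<noteq> 0) \<and>
     (\<forall>i j. i \<noteq> j \<longrightarrow>
        (Rmin x)^2 \<ge> 3 * (1 / \<gamma>^3) * (Rmax x / Rmin x)^2 * real CARD('n) * \<bar>x i \<bullet> x j\<bar>)"

definition cvx_obj :: "nat \<Rightarrow> nat \<Rightarrow> real^'d \<Rightarrow> real^'d \<Rightarrow> real" where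
  "cvx_obj m1 m2 v u = real m1 / 2 * (norm v)^2 + real m2 / 2 * (norm u)^2"

definition cvx_feasible :: "nat \<Rightarrow> nat \<Rightarrow> real \<Rightarrow> ('n \<Rightarrow> real^'d) \<Rightarrow> ('n \<Rightarrow> real) \<Rightarrow>
     real^'d \<Rightarrow> real^'d \<Rightarrow> bool" where
  "cvx_feasible m1 m2 \<gamma> x y v u \<longleftrightarrow>
     (\<forall>i. y i = 1 \<longrightarrow>
        real m1 / sqrt (real (m1 + m2)) * (v \<bullet> x i)
        - \<gamma> * (real m2 / sqrt (real (m1 + m2))) * (u \<bullet> x i) \<ge> 1) \<and>
     (\<forall>i. y i = -1 \<longrightarrow>
        real m2 / sqrt (real (m1 + m2)) * (u \<bullet> x i)
        - \<gamma> * (real m1 / sqrt (real (m1 + m2))) * (v \<bullet> x i) \<ge> 1)"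

definition cvx_global_opt :: "nat \<Rightarrow> nat \<Rightarrow> real \<Rightarrow> ('n \<Rightarrow> real^'d) \<Rightarrow> ('n \<Rightarrow> real) \<Rightarrow>
     real^'d \<Rightarrow> real^'d \<Rightarrow> bool" where
  "cvx_global_opt m1 m2 \<gamma> x y v u \<longleftrightarrow> cvx_feasible m1 m2 \<gamma> x y v u \<and>
     (\<forall>v' u'. cvx_feasible m1 m2 \<gamma> x y v' u' \<longrightarrow> cvx_obj m1 m2 v u \<le> cvx_obj m1 m2 v' u')"

definition zvec :: "nat \<Rightarrow> nat \<Rightarrow> real^'d \<Rightarrow> real^'d \<Rightarrow> real^'d" where
  "zvec m1 m2 v u = (real m1 / sqrt (real (m1 + m2))) *\<^sub>R v
                    - (real m2 / sqrt (real (m1 + m2))) *\<^sub>R u"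

definition minnorm_sep :: "('n \<Rightarrow> real^'d) \<Rightarrow> ('n \<Rightarrow> real) \<Rightarrow> real^'d \<Rightarrow> bool" where
  "minnorm_sep x y zs \<longleftrightarrow> (\<forall>i. y i * (zs \<bullet> x i) \<ge> 1) \<and>
     (\<forall>z. (\<forall>i. y i * (z \<bullet> x i) \<ge> 1) \<longrightarrow> norm zs \<le> norm z)"

end

theory Submission
  imports Defs
begin

text \<open>At a KKT point every row of \<open>W\<close> is a combination \<open>c \<Sum>\<^sub>i \<lambda>\<^sub>i y\<^sub>i \<sigma>\<^sub>i x\<^sub>i\<close> of the
  data, with slopes \<open>\<sigma>\<^sub>i \<in> [\<gamma>, 1]\<close> taken from the Clarke subdifferential of the leaky ReLU.
  On near-orthogonal data the margin of \<open>x\<^sub>k\<close> under such a row is essentially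
  \<open>c \<lambda>\<^sub>k \<sigma>\<^sub>k |x\<^sub>k|\<^sup>2\<close>. The constraint of the largest multiplier is active, which bounds all
  multipliers from above; feasibility then bounds them from below and forces every row to have
  a definite sign on every \<open>x\<^sub>k\<close>. So the slopes are determined, all rows of each kind coincide
  and every constraint is active. Global optimality follows because the Lagrangian splits into one
  row Lagrangian per hidden unit, uniquely minimized at the common row; the other claims are read
  off the resulting closed forms.\<close>

lemma leaky_nonneg: "0 \<le> a \<Longrightarrow> \<gamma> \<le> 1 \<Longrightarrow> leaky \<gamma> a = a"
  using mult_right_mono[of \<gamma> 1 a] by (simp add: leaky_def)

lemma leaky_nonpos: "a \<le> 0 \<Longrightarrow> \<gamma> \<le> 1 \<Longrightarrow> leaky \<gamma> a = \<gamma> * a"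
  using mult_right_mono_neg[of \<gamma> 1 a] by (simp add: leaky_def)

lemma leaky_zero [simp]: "leaky \<gamma> 0 = 0"
  by (simp add: leaky_def)

lemma leaky_mult_pos: "0 < c \<Longrightarrow> leaky \<gamma> (c * t) = c * leaky \<gamma> t"
  unfolding leaky_def by (simp add: max_mult_distrib_left mult.left_commute)

lemma leaky_ge_scale: "\<gamma> * a \<le> leaky \<gamma> a"
  by (simp add: leaky_def)

definition leaky_slope :: "real \<Rightarrow> real \<Rightarrow> real" where
  "leaky_slope \<gamma> a = (if a > 0 then 1 else \<gamma>)"

lemma leaky_has_real_derivative:
  assumes "a \<noteq> 0" "\<gamma> \<le> 1"
  shows "(leaky \<gamma> has_real_derivative leaky_slope \<gamma> a) (at a)"
proof (cases "a > 0")
  case True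
  have "((\<lambda>t. t) has_real_derivative 1) (at a)" by (rule DERIV_ident)
  then have "(leaky \<gamma> has_real_derivative 1) (at a)"
    by (rule has_field_derivative_transform_within_open[of _ _ _ "{0<..}"])
       (use True assms in \<open>auto simp: leaky_nonneg\<close>)
  then show ?thesis using True by (simp add: leaky_slope_def)
next
  case False
  then have "a < 0" using assms by simp
  have "((\<lambda>t. \<gamma> * t) has_real_derivative \<gamma>) (at a)"
    using DERIV_cmult[OF DERIV_ident, of \<gamma>] by simp
  then have "(leaky \<gamma> has_real_derivative \<gamma>) (at a)"
    by (rule has_field_derivative_transform_within_open[of _ _ _ "{..<0}"])
       (use \<open>a < 0\<close> assms in \<open>auto simp: leaky_nonpos\<close>)
  then show ?thesis using False by (simp add: leaky_slope_def)
qed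

definition signed_slope :: "real \<Rightarrow> real \<Rightarrow> real" where
  "signed_slope \<gamma> s = (if s = 1 then 1 else - \<gamma>)"

lemma label_mult_leaky_eq:
  assumes "s = 1 \<or> s = -1" "s * a > 0" "\<gamma> \<le> 1"
  shows "s * leaky \<gamma> a = signed_slope \<gamma> s * a"
  using assms leaky_nonneg[of a \<gamma>] leaky_nonpos[of a \<gamma>] by (auto simp: signed_slope_def)

lemma label_mult_leaky_ge:
  assumes "s = 1 \<or> s = -1" "s * a > 0" "0 < \<gamma>" "\<gamma> < 1"
  shows "\<gamma> * (s * a) \<le> s * leaky \<gamma> a"
  using assms label_mult_leaky_eq[of s a \<gamma>]
  by (auto simp: signed_slope_def mult_left_le_one_le)

lemma label_mult_leaky_le:
  assumes "s = 1 \<or> s = -1" "0 < \<gamma>" "\<gamma> < 1"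
  shows "s * leaky \<gamma> a \<le> max (s * a) 0"
  using assms leaky_nonneg[of a \<gamma>] leaky_nonpos[of a \<gamma>]
  by (cases "a \<ge> 0") (auto simp: mult_le_cancel_right1 mult_le_0_iff)

lemma sign_diff_leaky:
  assumes "0 < M1" "0 < M2" "0 < \<gamma>" "\<gamma> < 1"
  shows "sign (M1 * leaky \<gamma> a - M2 * leaky \<gamma> b) = sign (M1 * a - M2 * b)"
proof -
  have "M1 * leaky \<gamma> a - M2 * leaky \<gamma> b > 0 \<longleftrightarrow> M1 * a - M2 * b > 0"
  proof (cases "a \<ge> 0"; cases "b \<ge> 0")
    assume "a \<ge> 0" "b \<ge> 0" then show ?thesis using assms by (simp add: leaky_nonneg)
  next
    assume a: "a \<ge> 0" and b: "\<not> b \<ge> 0"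
    then have "M2 * b < 0" "M2 * (\<gamma> * b) < 0" "M1 * a \<ge> 0" using assms by (auto simp: mult_pos_neg)
    moreover have "M1 * leaky \<gamma> a - M2 * leaky \<gamma> b = M1 * a - M2 * (\<gamma> * b)"
      using a b assms by (simp add: leaky_nonneg leaky_nonpos)
    ultimately show ?thesis by linarith
  next
    assume a: "\<not> a \<ge> 0" and b: "b \<ge> 0"
    then have "M1 * a < 0" "M1 * (\<gamma> * a) < 0" "M2 * b \<ge> 0" using assms by (auto simp: mult_pos_neg)
    moreover have "M1 * leaky \<gamma> a - M2 * leaky \<gamma> b = M1 * (\<gamma> * a) - M2 * b"
      using a b assms by (simp add: leaky_nonneg leaky_nonpos)
    ultimately show ?thesis by linarith
  next
    assume "\<not> a \<ge> 0" "\<not> b \<ge> 0"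
    then have "M1 * leaky \<gamma> a - M2 * leaky \<gamma> b = \<gamma> * (M1 * a - M2 * b)"
      using assms by (simp add: leaky_nonpos algebra_simps)
    then show ?thesis using assms by (simp add: zero_less_mult_iff)
  qed
  then show ?thesis unfolding sign_def by simp
qed

section \<open>Clarke subdifferentials\<close>

lemma has_derivative_difference_quotient:
  fixes F :: "'a::real_inner \<Rightarrow> real"
  assumes "(F has_derivative (\<lambda>h. G \<bullet> h)) (at W)"
  shows "((\<lambda>t. (F (W + t *\<^sub>R E) - F W) / t) \<longlongrightarrow> G \<bullet> E) (at 0)"
proof -
  have line: "((\<lambda>t::real. W + t *\<^sub>R E) has_derivative (\<lambda>t. t *\<^sub>R E)) (at 0)"
    by (auto intro!: derivative_eq_intros)
  have "((\<lambda>t. F (W + t *\<^sub>R E)) has_derivative (\<lambda>t. G \<bullet> (t *\<^sub>R E))) (at 0)"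
    using diff_chain_at[OF line, of F] assms by (simp only: o_def add_0_right scale_zero_left)
  moreover have "(\<lambda>t. G \<bullet> (t *\<^sub>R E)) = (*) (G \<bullet> E)"
    by (auto simp: fun_eq_iff)
  ultimately have "((\<lambda>t. F (W + t *\<^sub>R E)) has_field_derivative (G \<bullet> E)) (at 0)"
    by (simp add: has_field_derivative_def)
  then show ?thesis by (simp add: has_field_derivative_iff)
qed

lemma gradient_in_clarke_subdiff:
  assumes "(f has_derivative (\<lambda>h. G \<bullet> h)) (at w)"
  shows "G \<in> clarke_subdiff f w"
  unfolding clarke_subdiff_def
  by (rule hull_inc, rule CollectI, rule exI[of _ "\<lambda>k. w"], rule exI[of _ "\<lambda>k. G"])
     (use assms in simp)

lemma clarke_subdiff_continuous_gradient:
  fixes f :: "'a::euclidean_space \<Rightarrow> real"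
  assumes D: "\<And>w. (f has_derivative (\<lambda>h. Df w \<bullet> h)) (at w)" and c: "continuous_on UNIV Df"
  shows "clarke_subdiff f w \<subseteq> {Df w}"
  unfolding clarke_subdiff_def
proof (rule hull_minimal[of _ _ convex, OF _ convex_singleton], safe)
  fix g xs gs
  assume xs: "xs \<longlonglongrightarrow> w" and Dk: "\<forall>k. (f has_derivative (\<bullet>) (gs k)) (at (xs k))"
    and gs: "gs \<longlonglongrightarrow> g"
  have "gs k = Df (xs k)" for k
  proof -
    have "(\<lambda>h. gs k \<bullet> h) = (\<lambda>h. Df (xs k) \<bullet> h)"
      using has_derivative_unique[OF _ D] Dk by simp
    then show ?thesis by (metis euclidean_eqI)
  qed
  then have "gs = (\<lambda>k. Df (xs k))" by blast
  moreover have "(\<lambda>k. Df (xs k)) \<longlonglongrightarrow> Df w"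
    by (rule continuous_on_tendsto_compose[OF c xs]) auto
  ultimately show "g = Df w" using LIMSEQ_unique[OF gs] by simp
qed

lemma clarke_subdiff_half_sqnorm:
  "clarke_subdiff (\<lambda>z::'a::euclidean_space. (1/2) * (norm z)^2) w = {w}"
proof -
  have D: "((\<lambda>z. (1/2) * (norm z)^2) has_derivative (\<lambda>h. w \<bullet> h)) (at w)" for w :: 'a
    unfolding power2_norm_eq_inner by (auto intro!: derivative_eq_intros simp: inner_commute)
  show ?thesis
    using clarke_subdiff_continuous_gradient[of _ "\<lambda>w. w", OF D]
      gradient_in_clarke_subdiff[OF D] by (auto simp: continuous_on_id)
qed

lemma clarke_subdiff_affine:
  "clarke_subdiff (\<lambda>z::'a::euclidean_space. \<beta> - s * (z \<bullet> a)) w = {- s *\<^sub>R a}"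
proof -
  have D: "((\<lambda>z. \<beta> - s * (z \<bullet> a)) has_derivative (\<lambda>h. (- s *\<^sub>R a) \<bullet> h)) (at w)" for w :: 'a
    by (auto intro!: derivative_eq_intros simp: inner_commute)
  show ?thesis
    using clarke_subdiff_continuous_gradient[of _ "\<lambda>_. - s *\<^sub>R a", OF D]
      gradient_in_clarke_subdiff[OF D] by auto
qed

text \<open>\<open>leaky_clarke_row \<kappa> \<gamma> a x r\<close> says that \<open>r = (\<kappa> * s) *\<^sub>R x\<close> with \<open>s \<in> [\<gamma>, 1]\<close>,
  \<open>s = 1\<close> if \<open>a > 0\<close> and \<open>s = \<gamma>\<close> if \<open>a < 0\<close>: the Clarke subdifferential of
  \<open>w \<mapsto> \<kappa> * leaky \<gamma> (w \<bullet> x)\<close> at a point with \<open>w \<bullet> x = a\<close>. It is phrased through \<open>r \<bullet> z\<close> and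
  \<open>r \<bullet> x\<close> so that it is visibly closed under limits and convex combinations.\<close>
definition leaky_clarke_row :: "real \<Rightarrow> real \<Rightarrow> real \<Rightarrow> 'a::real_inner \<Rightarrow> 'a \<Rightarrow> bool" where
  "leaky_clarke_row \<kappa> \<gamma> a x r \<longleftrightarrow> (\<forall>z. z \<bullet> x = 0 \<longrightarrow> r \<bullet> z = 0) \<and>
     \<gamma> \<le> r \<bullet> x / (\<kappa> * (x \<bullet> x)) \<and> r \<bullet> x / (\<kappa> * (x \<bullet> x)) \<le> 1 \<and>
     (a > 0 \<longrightarrow> r \<bullet> x / (\<kappa> * (x \<bullet> x)) = 1) \<and> (a < 0 \<longrightarrow> r \<bullet> x / (\<kappa> * (x \<bullet> x)) = \<gamma>)"

lemma leaky_quotient_at_right: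
  assumes "b > 0" "a \<ge> 0" "\<gamma> \<le> 1"
  shows "((\<lambda>t. k * (leaky \<gamma> (a + t*b) - leaky \<gamma> a)/t) \<longlongrightarrow> k * b) (at_right 0)"
proof (rule tendsto_eventually, rule eventually_at_rightI[of 0 1])
  fix t :: real assume "t \<in> {0<..<1}"
  with assms show "k * (leaky \<gamma> (a + t*b) - leaky \<gamma> a)/t = k * b"
    by (simp add: leaky_nonneg)
qed simp

lemma leaky_quotient_at_left:
  assumes "b > 0" "a \<le> 0" "\<gamma> \<le> 1"
  shows "((\<lambda>t. k * (leaky \<gamma> (a + t*b) - leaky \<gamma> a)/t) \<longlongrightarrow> k * (\<gamma> * b)) (at_left 0)"
proof (rule tendsto_eventually, rule eventually_at_leftI[of "-1" 0])
  fix t :: real assume "t \<in> {-1<..<0}"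
  then have "a + t*b \<le> 0" using assms by (simp add: mult_neg_pos add_nonpos_nonpos less_imp_le)
  with assms \<open>t \<in> {-1<..<0}\<close> show "k * (leaky \<gamma> (a + t*b) - leaky \<gamma> a)/t = k * (\<gamma>*b)"
    by (simp add: leaky_nonpos algebra_simps)
qed simp

text \<open>A gradient of \<open>w \<mapsto> \<kappa> * leaky \<gamma> (w \<bullet> x)\<close> is determined by its directional derivatives;
  the one-sided quotients in direction \<open>x\<close> pin down \<open>r \<bullet> x\<close>.\<close>
lemma leaky_clarke_row_of_quotients:
  fixes x r :: "'a::real_inner"
  assumes q: "\<And>z. ((\<lambda>t. \<kappa> * (leaky \<gamma> (a + t*(z\<bullet>x)) - leaky \<gamma> a)/t) \<longlongrightarrow> r\<bullet>z) (at 0)"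
    and k: "\<kappa> \<noteq> 0" and x: "x \<noteq> 0" and g: "0 < \<gamma>" "\<gamma> < 1"
  shows "leaky_clarke_row \<kappa> \<gamma> a x r"
proof -
  have orth: "r \<bullet> z = 0" if "z \<bullet> x = 0" for z
    using tendsto_unique[OF _ q[of z]] that by simp
  define b where "b = x \<bullet> x"
  have b: "b > 0" using x by (simp add: b_def)
  have right: "r \<bullet> x = \<kappa> * b" if "a \<ge> 0"
  proof -
    have "((\<lambda>t. \<kappa> * (leaky \<gamma> (a + t*b) - leaky \<gamma> a)/t) \<longlongrightarrow> r\<bullet>x) (at_right 0)"
      using tendsto_mono[OF at_le[of "{0<..}"] q[of x]] by (simp add: b_def)
    from tendsto_unique[OF _ this leaky_quotient_at_right[OF b that]] g show ?thesis by simp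
  qed
  have left: "r \<bullet> x = \<kappa> * (\<gamma> * b)" if "a \<le> 0"
  proof -
    have "((\<lambda>t. \<kappa> * (leaky \<gamma> (a + t*b) - leaky \<gamma> a)/t) \<longlongrightarrow> r\<bullet>x) (at_left 0)"
      using tendsto_mono[OF at_le[of "{..<0}"] q[of x]] by (simp add: b_def)
    from tendsto_unique[OF _ this leaky_quotient_at_left[OF b that]] g show ?thesis by simp
  qed
  have "\<kappa> * b \<noteq> 0" using k b by simp
  then show ?thesis unfolding leaky_clarke_row_def b_def[symmetric]
    using orth right left g by (cases "a \<ge> 0"; cases "a \<le> 0") auto
qed

lemma leaky_clarke_row_limit:
  fixes x w r :: "'a::real_inner"
  assumes ws: "ws \<longlonglongrightarrow> w" and rs: "rs \<longlonglongrightarrow> r"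
    and R: "\<And>k. leaky_clarke_row \<kappa> \<gamma> (ws k \<bullet> x) x (rs k)"
  shows "leaky_clarke_row \<kappa> \<gamma> (w \<bullet> x) x r"
proof -
  define K where "K = \<kappa> * (x \<bullet> x)"
  have orth: "r \<bullet> z = 0" if "z \<bullet> x = 0" for z
  proof -
    have "(\<lambda>k. rs k \<bullet> z) \<longlonglongrightarrow> r \<bullet> z" by (intro tendsto_intros rs)
    moreover have "rs k \<bullet> z = 0" for k using R that unfolding leaky_clarke_row_def by blast
    ultimately show ?thesis using LIMSEQ_unique[OF _ tendsto_const] by simp
  qed
  have q: "(\<lambda>k. rs k \<bullet> x / K) \<longlonglongrightarrow> r \<bullet> x / K"
    using tendsto_mult_right[OF tendsto_inner[OF rs tendsto_const], of x "inverse K"]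
    by (simp add: divide_inverse)
  have a: "(\<lambda>k. ws k \<bullet> x) \<longlonglongrightarrow> w \<bullet> x" by (intro tendsto_intros ws)
  have lo: "\<And>k. \<gamma> \<le> rs k \<bullet> x / K" and hi: "\<And>k. rs k \<bullet> x / K \<le> 1"
    and pos: "\<And>k. ws k \<bullet> x > 0 \<Longrightarrow> rs k \<bullet> x / K = 1"
    and neg: "\<And>k. ws k \<bullet> x < 0 \<Longrightarrow> rs k \<bullet> x / K = \<gamma>"
    using R unfolding leaky_clarke_row_def K_def by blast+
  have "r \<bullet> x / K = 1" if "w \<bullet> x > 0"
  proof -
    have "eventually (\<lambda>k. rs k \<bullet> x / K = 1) sequentially"
      using order_tendstoD(1)[OF a that] by eventually_elim (rule pos)
    then show ?thesis by (rule LIMSEQ_unique[OF q tendsto_eventually])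
  qed
  moreover have "r \<bullet> x / K = \<gamma>" if "w \<bullet> x < 0"
  proof -
    have "eventually (\<lambda>k. rs k \<bullet> x / K = \<gamma>) sequentially"
      using order_tendstoD(2)[OF a that] by eventually_elim (rule neg)
    then show ?thesis by (rule LIMSEQ_unique[OF q tendsto_eventually])
  qed
  moreover have "\<gamma> \<le> r \<bullet> x / K" by (rule LIMSEQ_le_const[OF q]) (use lo in auto)
  moreover have "r \<bullet> x / K \<le> 1" by (rule LIMSEQ_le_const2[OF q]) (use hi in auto)
  ultimately show ?thesis unfolding leaky_clarke_row_def K_def[symmetric] using orth by blast
qed

lemma leaky_clarke_row_convex:
  fixes x r1 r2 :: "'a::real_inner"
  assumes "leaky_clarke_row \<kappa> \<gamma> a x r1" "leaky_clarke_row \<kappa> \<gamma> a x r2"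
    and "0 \<le> u" "0 \<le> v" "u + v = 1"
  shows "leaky_clarke_row \<kappa> \<gamma> a x (u *\<^sub>R r1 + v *\<^sub>R r2)"
proof -
  define K where "K = \<kappa> * (x \<bullet> x)"
  define q1 where "q1 = r1 \<bullet> x / K"
  define q2 where "q2 = r2 \<bullet> x / K"
  have e: "(u *\<^sub>R r1 + v *\<^sub>R r2) \<bullet> x / K = u * q1 + v * q2"
    by (simp add: q1_def q2_def inner_add_left add_divide_distrib)
  have b1: "\<gamma> \<le> q1" "q1 \<le> 1" "a > 0 \<longrightarrow> q1 = 1" "a < 0 \<longrightarrow> q1 = \<gamma>"
    using assms(1) by (auto simp: leaky_clarke_row_def q1_def K_def)
  have b2: "\<gamma> \<le> q2" "q2 \<le> 1" "a > 0 \<longrightarrow> q2 = 1" "a < 0 \<longrightarrow> q2 = \<gamma>"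
    using assms(2) by (auto simp: leaky_clarke_row_def q2_def K_def)
  have "u * \<gamma> \<le> u * q1" "v * \<gamma> \<le> v * q2" "u * q1 \<le> u * 1" "v * q2 \<le> v * 1"
    using b1(1,2) b2(1,2) assms(3,4) by (simp_all only: mult_left_mono)
  moreover have "\<gamma> = u * \<gamma> + v * \<gamma>" using assms(5) by (metis distrib_right mult_1)
  ultimately have "\<gamma> \<le> u * q1 + v * q2" "u * q1 + v * q2 \<le> 1" using assms(5) by linarith+
  moreover have "a > 0 \<longrightarrow> u * q1 + v * q2 = 1"
    using b1(3) b2(3) assms(5) by simp
  moreover have "a < 0 \<longrightarrow> u * q1 + v * q2 = \<gamma>"
    using b1(4) b2(4) \<open>\<gamma> = u * \<gamma> + v * \<gamma>\<close> by simp
  moreover have "\<forall>z. z \<bullet> x = 0 \<longrightarrow> (u *\<^sub>R r1 + v *\<^sub>R r2) \<bullet> z = 0"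
    using assms(1,2) by (simp add: leaky_clarke_row_def inner_add_left)
  ultimately show ?thesis unfolding leaky_clarke_row_def K_def[symmetric] e by blast
qed

lemma leaky_clarke_row_eq_scaleR:
  fixes x r :: "'a::real_inner"
  assumes "leaky_clarke_row \<kappa> \<gamma> a x r" "x \<noteq> 0" "\<kappa> \<noteq> 0"
  shows "r = (\<kappa> * (r \<bullet> x / (\<kappa> * (x \<bullet> x)))) *\<^sub>R x"
proof -
  define z where "z = r - (r \<bullet> x / (x \<bullet> x)) *\<^sub>R x"
  have "z \<bullet> x = 0" unfolding z_def using assms(2) by (simp add: inner_diff_left)
  then have "r \<bullet> z = 0" using assms(1) unfolding leaky_clarke_row_def by blast
  then have "z \<bullet> z = 0" using \<open>z \<bullet> x = 0\<close> unfolding z_def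
    by (simp add: inner_diff_left inner_diff_right inner_commute)
  then have "r = (r \<bullet> x / (x \<bullet> x)) *\<^sub>R x" unfolding z_def by simp
  then show ?thesis using assms(3) by simp
qed

lemma sqrt_card_sum_pos: "0 < 1 / sqrt (real (CARD('m1::finite) + CARD('m2::finite)))"
  by (simp add: add_pos_pos)

lemma net_add_axis:
  fixes W :: "(real^'d^'m1::finite) \<times> (real^'d^'m2::finite)"
  defines "c \<equiv> 1 / sqrt (real (CARD('m1) + CARD('m2)))"
  shows "net \<gamma> (W + t *\<^sub>R (axis j z, 0)) \<xi> =
      net \<gamma> W \<xi> + c * (leaky \<gamma> (fst W $ j \<bullet> \<xi> + t * (z \<bullet> \<xi>)) - leaky \<gamma> (fst W $ j \<bullet> \<xi>))"
    and "net \<gamma> (W + t *\<^sub>R (0, axis k z)) \<xi> =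
      net \<gamma> W \<xi> - c * (leaky \<gamma> (snd W $ k \<bullet> \<xi> + t * (z \<bullet> \<xi>)) - leaky \<gamma> (snd W $ k \<bullet> \<xi>))"
proof -
  have update: "(\<Sum>j'\<in>UNIV. c * leaky \<gamma> ((A + t *\<^sub>R axis j z) $ j' \<bullet> \<xi>))
      = (\<Sum>j'\<in>UNIV. c * leaky \<gamma> (A $ j' \<bullet> \<xi>))
        + c * (leaky \<gamma> (A $ j \<bullet> \<xi> + t * (z \<bullet> \<xi>)) - leaky \<gamma> (A $ j \<bullet> \<xi>))"
    for A :: "real^'d^'m" and j :: 'm
    by (simp add: axis_def sum.remove[of UNIV j] inner_add_left algebra_simps)
  show "net \<gamma> (W + t *\<^sub>R (axis j z, 0)) \<xi> =
      net \<gamma> W \<xi> + c * (leaky \<gamma> (fst W $ j \<bullet> \<xi> + t * (z \<bullet> \<xi>)) - leaky \<gamma> (fst W $ j \<bullet> \<xi>))"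
    using update[of "fst W"] unfolding net_def c_def by simp
  show "net \<gamma> (W + t *\<^sub>R (0, axis k z)) \<xi> =
      net \<gamma> W \<xi> - c * (leaky \<gamma> (snd W $ k \<bullet> \<xi> + t * (z \<bullet> \<xi>)) - leaky \<gamma> (snd W $ k \<bullet> \<xi>))"
    using update[of "snd W"] unfolding net_def c_def by simp
qed

lemma P_cons_gradient_rows:
  fixes W G :: "(real^'d^'m1::finite) \<times> (real^'d^'m2::finite)"
  defines "c \<equiv> 1 / sqrt (real (CARD('m1) + CARD('m2)))"
  assumes D: "(P_cons \<gamma> x y i has_derivative (\<lambda>h. G \<bullet> h)) (at W)"
    and y: "y i = 1 \<or> y i = -1" and x: "x i \<noteq> 0" and g: "0 < \<gamma>" "\<gamma> < 1"
  shows "leaky_clarke_row (- y i * c) \<gamma> (fst W $ j \<bullet> x i) (x i) (fst G $ j)"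
    and "leaky_clarke_row (y i * c) \<gamma> (snd W $ k \<bullet> x i) (x i) (snd G $ k)"
proof -
  have c: "c \<noteq> 0" unfolding c_def using sqrt_card_sum_pos by (rule less_imp_neq[symmetric])
  have "y i \<noteq> 0" using y by auto
  note quotient = has_derivative_difference_quotient[OF D]
  show "leaky_clarke_row (- y i * c) \<gamma> (fst W $ j \<bullet> x i) (x i) (fst G $ j)"
  proof (rule leaky_clarke_row_of_quotients[OF _ _ x g])
    fix z
    show "((\<lambda>t. - y i * c * (leaky \<gamma> (fst W $ j \<bullet> x i + t * (z \<bullet> x i)) - leaky \<gamma> (fst W $ j \<bullet> x i)) / t)
       \<longlongrightarrow> fst G $ j \<bullet> z) (at 0)"
      using quotient[of "(axis j z, 0)"]
      unfolding P_cons_def net_add_axis c_def by (simp add: inner_Pair_0 inner_axis algebra_simps)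
  qed (use c \<open>y i \<noteq> 0\<close> in simp)
  show "leaky_clarke_row (y i * c) \<gamma> (snd W $ k \<bullet> x i) (x i) (snd G $ k)"
  proof (rule leaky_clarke_row_of_quotients[OF _ _ x g])
    fix z
    show "((\<lambda>t. y i * c * (leaky \<gamma> (snd W $ k \<bullet> x i + t * (z \<bullet> x i)) - leaky \<gamma> (snd W $ k \<bullet> x i)) / t)
       \<longlongrightarrow> snd G $ k \<bullet> z) (at 0)"
      using quotient[of "(0, axis k z)"]
      unfolding P_cons_def net_add_axis c_def by (simp add: inner_Pair_0 inner_axis algebra_simps)
  qed (use c \<open>y i \<noteq> 0\<close> in simp)
qed

definition P_cons_rows :: "real \<Rightarrow> ('n \<Rightarrow> real^'d) \<Rightarrow> ('n \<Rightarrow> real) \<Rightarrow> 'n \<Rightarrow>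
   (real^'d^'m1::finite) \<times> (real^'d^'m2::finite) \<Rightarrow> ((real^'d^'m1) \<times> (real^'d^'m2)) set" where
  "P_cons_rows \<gamma> x y i W = {G.
     (\<forall>j. leaky_clarke_row (- y i * (1 / sqrt (real (CARD('m1) + CARD('m2)))))
            \<gamma> (fst W $ j \<bullet> x i) (x i) (fst G $ j)) \<and>
     (\<forall>j. leaky_clarke_row (y i * (1 / sqrt (real (CARD('m1) + CARD('m2)))))
            \<gamma> (snd W $ j \<bullet> x i) (x i) (snd G $ j))}"

lemma convex_P_cons_rows: "convex (P_cons_rows \<gamma> x y i W)"
  unfolding convex_def P_cons_rows_def
  by (auto intro!: leaky_clarke_row_convex)

lemma clarke_subdiff_P_cons:
  fixes W :: "(real^'d^'m1::finite) \<times> (real^'d^'m2::finite)"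
  assumes y: "y i = 1 \<or> y i = -1" and x: "x i \<noteq> 0" and g: "0 < \<gamma>" "\<gamma> < 1"
  shows "clarke_subdiff (P_cons \<gamma> x y i) W \<subseteq> P_cons_rows \<gamma> x y i W"
  unfolding clarke_subdiff_def
proof (rule hull_minimal[of _ _ convex, OF _ convex_P_cons_rows], safe)
  fix g :: "(real^'d^'m1) \<times> (real^'d^'m2)" and xs gs
  assume xs: "xs \<longlonglongrightarrow> W" and D: "\<forall>k. (P_cons \<gamma> x y i has_derivative (\<bullet>) (gs k)) (at (xs k))"
    and gs: "gs \<longlonglongrightarrow> g"
  note rows = P_cons_gradient_rows[OF D[rule_format] y x g]
  show "g \<in> P_cons_rows \<gamma> x y i W" unfolding P_cons_rows_def
  proof (intro CollectI conjI allI)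
    fix j
    show "leaky_clarke_row (- y i * (1 / sqrt (real (CARD('m1) + CARD('m2)))))
            \<gamma> (fst W $ j \<bullet> x i) (x i) (fst g $ j)"
      by (rule leaky_clarke_row_limit[where ws="\<lambda>k. fst (xs k) $ j" and rs="\<lambda>k. fst (gs k) $ j"])
         (intro tendsto_vec_nth tendsto_fst xs gs rows)+
  next
    fix j
    show "leaky_clarke_row (y i * (1 / sqrt (real (CARD('m1) + CARD('m2)))))
            \<gamma> (snd W $ j \<bullet> x i) (x i) (snd g $ j)"
      by (rule leaky_clarke_row_limit[where ws="\<lambda>k. snd (xs k) $ j" and rs="\<lambda>k. snd (gs k) $ j"])
         (intro tendsto_vec_nth tendsto_snd xs gs rows)+
  qed
qed

section \<open>Rows of a KKT point\<close>

definition row_representation :: "real \<Rightarrow> real \<Rightarrow> ('n::finite \<Rightarrow> real) \<Rightarrow> ('n \<Rightarrow> real) \<Rightarrow>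
    ('n \<Rightarrow> 'a::real_inner) \<Rightarrow> 'a \<Rightarrow> bool" where
  "row_representation c \<gamma> lam s x w \<longleftrightarrow> (\<exists>\<sigma>. w = c *\<^sub>R (\<Sum>i\<in>UNIV. (lam i * s i * \<sigma> i) *\<^sub>R x i) \<and>
     (\<forall>i. \<gamma> \<le> \<sigma> i \<and> \<sigma> i \<le> 1 \<and> (w \<bullet> x i > 0 \<longrightarrow> \<sigma> i = 1) \<and> (w \<bullet> x i < 0 \<longrightarrow> \<sigma> i = \<gamma>)))"

lemma row_representation_of_clarke_rows:
  fixes x :: "'n::finite \<Rightarrow> 'a::real_inner"
  assumes rows: "\<And>i. leaky_clarke_row (- s i * c) \<gamma> (w \<bullet> x i) (x i) (r i)"
    and w: "w = - (\<Sum>i\<in>UNIV. lam i *\<^sub>R r i)"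
    and s: "\<And>i. s i = 1 \<or> s i = -1" and c: "c \<noteq> 0" and x: "\<And>i. x i \<noteq> 0"
  shows "row_representation c \<gamma> lam s x w"
  unfolding row_representation_def
proof (intro exI conjI allI)
  define \<sigma> where "\<sigma> i = r i \<bullet> x i / ((- s i * c) * (x i \<bullet> x i))" for i
  have "s i * c \<noteq> 0" for i using s[of i] c by auto
  then have "r i = ((- s i * c) * \<sigma> i) *\<^sub>R x i" for i
    unfolding \<sigma>_def using leaky_clarke_row_eq_scaleR[OF rows x] by simp
  then show "w = c *\<^sub>R (\<Sum>i\<in>UNIV. (lam i * s i * \<sigma> i) *\<^sub>R x i)"
    unfolding w by (simp add: scaleR_sum_right sum_negf[symmetric] algebra_simps)
  fix i
  show "\<gamma> \<le> \<sigma> i" "\<sigma> i \<le> 1" "0 < w \<bullet> x i \<longrightarrow> \<sigma> i = 1" "w \<bullet> x i < 0 \<longrightarrow> \<sigma> i = \<gamma>"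
    using rows[of i] unfolding leaky_clarke_row_def \<sigma>_def by auto
qed

lemma kkt_point_row_representation:
  fixes W :: "(real^'d^'m1::finite) \<times> (real^'d^'m2::finite)" and x :: "'n::finite \<Rightarrow> real^'d"
  defines "c \<equiv> 1 / sqrt (real (CARD('m1) + CARD('m2)))"
  assumes K: "kkt_point P_obj (P_cons \<gamma> x y) W" and y: "\<And>i. y i = 1 \<or> y i = -1"
    and x: "\<And>i. x i \<noteq> 0" and g: "0 < \<gamma>" "\<gamma> < 1"
  obtains lam where "\<And>i. 0 \<le> lam i" "\<And>i. lam i * (1 - y i * net \<gamma> W (x i)) = 0"
    "\<And>i. 1 \<le> y i * net \<gamma> W (x i)"
    "\<And>j. row_representation c \<gamma> lam y x (fst W $ j)"
    "\<And>j. row_representation c \<gamma> lam (\<lambda>i. - y i) x (snd W $ j)"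
proof -
  have c: "c \<noteq> 0" unfolding c_def using sqrt_card_sum_pos by (rule less_imp_neq[symmetric])
  from K obtain lam a b where feas: "\<forall>i. P_cons \<gamma> x y i W \<le> 0" and lam: "\<forall>i. 0 \<le> lam i"
    and slack: "\<forall>i. lam i * P_cons \<gamma> x y i W = 0"
    and a: "a \<in> clarke_subdiff P_obj W" and b: "\<forall>i. b i \<in> clarke_subdiff (P_cons \<gamma> x y i) W"
    and stationary: "0 = a + (\<Sum>i\<in>UNIV. lam i *\<^sub>R b i)"
    unfolding kkt_point_def by blast
  have "a = W" using a clarke_subdiff_half_sqnorm[of W] by (simp add: P_obj_def[abs_def])
  then have W: "W = - (\<Sum>i\<in>UNIV. lam i *\<^sub>R b i)"
    using stationary by (simp add: eq_neg_iff_add_eq_0)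
  have rows: "b i \<in> P_cons_rows \<gamma> x y i W" for i
    using clarke_subdiff_P_cons[of y i x, OF y x g] b by blast
  have "row_representation c \<gamma> lam y x (fst W $ j)" for j
  proof (rule row_representation_of_clarke_rows[OF _ _ y c x])
    show "leaky_clarke_row (- y i * c) \<gamma> (fst W $ j \<bullet> x i) (x i) (fst (b i) $ j)" for i
      using rows[of i] unfolding P_cons_rows_def c_def by blast
    show "fst W $ j = - (\<Sum>i\<in>UNIV. lam i *\<^sub>R fst (b i) $ j)"
      by (subst W) (simp add: fst_sum)
  qed
  moreover have "row_representation c \<gamma> lam (\<lambda>i. - y i) x (snd W $ j)" for j
  proof (rule row_representation_of_clarke_rows[OF _ _ _ c x])
    show "leaky_clarke_row (- (- y i) * c) \<gamma> (snd W $ j \<bullet> x i) (x i) (snd (b i) $ j)" for i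
      using rows[of i] unfolding P_cons_rows_def c_def by simp
    show "snd W $ j = - (\<Sum>i\<in>UNIV. lam i *\<^sub>R snd (b i) $ j)"
      by (subst W) (simp add: snd_sum)
  qed (use y in \<open>force simp: minus_equation_iff\<close>)
  ultimately show ?thesis
    using that lam slack feas unfolding P_cons_def by auto
qed

lemma Rmin_le_norm: "Rmin x \<le> norm (x i)"
  unfolding Rmin_def by (rule Min_le) auto

lemma norm_le_Rmax: "norm (x i) \<le> Rmax x"
  unfolding Rmax_def by (rule Max_ge) auto

lemma Rmin_pos_of_nonzero: "(\<And>i. x i \<noteq> 0) \<Longrightarrow> 0 < Rmin x"
  using Min_in[of "range (\<lambda>i. norm (x i))"] unfolding Rmin_def by auto

lemma data_hyp_inner_le:
  fixes x :: "'n::finite \<Rightarrow> real^'d"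
  assumes H: "data_hyp \<gamma> x y" and g: "0 < \<gamma>" and ij: "i \<noteq> j"
  shows "\<bar>x i \<bullet> x j\<bar> \<le> \<gamma>^3 * Rmin x^4 / (3 * Rmax x^2 * real CARD('n))"
proof -
  have pos: "0 < Rmin x" using H by (intro Rmin_pos_of_nonzero) (auto simp: data_hyp_def)
  then have "0 < Rmax x" using Rmin_le_norm[of x] norm_le_Rmax[of x] by (meson less_le_trans)
  define A where "A = 3 * Rmax x^2 * real CARD('n)"
  have A: "A > 0" unfolding A_def using \<open>0 < Rmax x\<close> by simp
  have "3 * (1 / \<gamma>^3) * (Rmax x / Rmin x)^2 * real CARD('n) * \<bar>x i \<bullet> x j\<bar>
        = A * \<bar>x i \<bullet> x j\<bar> / (\<gamma>^3 * Rmin x^2)"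
    unfolding A_def using pos g by (simp add: field_simps power2_eq_square)
  with H ij have "A * \<bar>x i \<bullet> x j\<bar> / (\<gamma>^3 * Rmin x^2) \<le> Rmin x^2"
    unfolding data_hyp_def by metis
  then have "A * \<bar>x i \<bullet> x j\<bar> \<le> Rmin x^2 * (\<gamma>^3 * Rmin x^2)"
    using pos g by (simp add: divide_le_eq)
  then show ?thesis
    using A unfolding A_def[symmetric] by (simp add: le_divide_eq power4_eq_xxxx power2_eq_square mult_ac)
qed

lemma inner_sum_scaleR_offdiag_bound:
  fixes x :: "'n::finite \<Rightarrow> 'a::real_inner"
  assumes X: "\<And>i j. i \<noteq> j \<Longrightarrow> \<bar>x i \<bullet> x j\<bar> \<le> D" and B: "\<And>k. \<bar>\<beta> k\<bar> \<le> Bd" and D0: "0 \<le> D"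
  shows "\<bar>(\<Sum>k\<in>UNIV. \<beta> k *\<^sub>R x k) \<bullet> x i - \<beta> i * (x i \<bullet> x i)\<bar> \<le> Bd * (real CARD('n) * D)"
proof -
  have "0 \<le> Bd" using B[of i] by linarith
  have "(\<Sum>k\<in>UNIV. \<beta> k *\<^sub>R x k) \<bullet> x i = (\<Sum>k\<in>UNIV. \<beta> k * (x k \<bullet> x i))"
    by (simp add: inner_sum_left)
  also have "\<dots> = \<beta> i * (x i \<bullet> x i) + (\<Sum>k\<in>UNIV - {i}. \<beta> k * (x k \<bullet> x i))"
    by (simp add: sum.remove)
  finally have "(\<Sum>k\<in>UNIV. \<beta> k *\<^sub>R x k) \<bullet> x i - \<beta> i * (x i \<bullet> x i) = (\<Sum>k\<in>UNIV - {i}. \<beta> k * (x k \<bullet> x i))"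
    by simp
  also have "\<bar>\<dots>\<bar> \<le> (\<Sum>k\<in>UNIV - {i}. \<bar>\<beta> k * (x k \<bullet> x i)\<bar>)"
    by (rule sum_abs)
  also have "\<dots> \<le> (\<Sum>k\<in>UNIV - {i}. Bd * D)"
  proof (rule sum_mono)
    fix k assume "k \<in> UNIV - {i}"
    then have "\<bar>x k \<bullet> x i\<bar> \<le> D" using X by auto
    then show "\<bar>\<beta> k * (x k \<bullet> x i)\<bar> \<le> Bd * D"
      unfolding abs_mult using B[of k] by (intro mult_mono) auto
  qed
  also have "\<dots> \<le> real CARD('n) * (Bd * D)"
    using \<open>0 \<le> Bd\<close> D0 by (simp add: card_Diff_subset mult_right_mono)
  finally show ?thesis by (simp add: ac_simps)
qed

text \<open>On near-orthogonal data a represented row sees \<open>x\<^sub>k\<close> essentially through its own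
  coefficient \<open>\<lambda>\<^sub>k \<sigma>\<^sub>k\<close>; the cross terms cost at most \<open>\<Lambda> n D\<close>.\<close>
lemma row_representation_margin_bounds:
  fixes x :: "'n::finite \<Rightarrow> 'a::real_inner"
  assumes R: "row_representation c \<gamma> lam s x w" and c: "c > 0" and g: "0 < \<gamma>" "\<gamma> < 1"
    and s: "\<And>i. s i = 1 \<or> s i = -1" and lam: "\<And>i. 0 \<le> lam i" "\<And>i. lam i \<le> \<Lambda>"
    and X: "\<And>i j. i \<noteq> j \<Longrightarrow> \<bar>x i \<bullet> x j\<bar> \<le> D" and D0: "0 \<le> D"
    and N: "\<And>i. Rn \<le> norm (x i)" "\<And>i. norm (x i) \<le> Rx" and Rn: "0 \<le> Rn"
  shows "c * (lam k * \<gamma> * Rn^2 - \<Lambda> * (real CARD('n) * D)) \<le> s k * (w \<bullet> x k)"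
    and "s k * (w \<bullet> x k) \<le> c * (lam k * Rx^2 + \<Lambda> * (real CARD('n) * D))"
proof -
  obtain \<sigma> where w: "w = c *\<^sub>R (\<Sum>i\<in>UNIV. (lam i * s i * \<sigma> i) *\<^sub>R x i)"
    and \<sigma>: "\<And>i. \<gamma> \<le> \<sigma> i \<and> \<sigma> i \<le> 1" using R unfolding row_representation_def by blast
  define \<beta> where "\<beta> i = lam i * s i * \<sigma> i" for i
  have s2: "s i * s i = 1" for i using s[of i] by auto
  have "\<bar>\<beta> i\<bar> = lam i * \<sigma> i" for i
    unfolding \<beta>_def using s[of i] lam(1)[of i] \<sigma>[of i] g by (auto simp: abs_mult)
  moreover have "lam i * \<sigma> i \<le> \<Lambda>" for i
    using mult_left_mono[of "\<sigma> i" 1 "lam i"] \<sigma>[of i] lam[of i] by linarith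
  ultimately have "\<bar>\<beta> i\<bar> \<le> \<Lambda>" for i by simp
  define e where "e = (\<Sum>i\<in>UNIV. \<beta> i *\<^sub>R x i) \<bullet> x k - \<beta> k * (x k \<bullet> x k)"
  have e: "\<bar>e\<bar> \<le> \<Lambda> * (real CARD('n) * D)"
    unfolding e_def by (rule inner_sum_scaleR_offdiag_bound[OF X \<open>\<And>i. \<bar>\<beta> i\<bar> \<le> \<Lambda>\<close> D0])
  have S: "(\<Sum>i\<in>UNIV. \<beta> i *\<^sub>R x i) \<bullet> x k = \<beta> k * (x k \<bullet> x k) + e"
    unfolding e_def by simp
  have q: "Rn^2 \<le> x k \<bullet> x k" "x k \<bullet> x k \<le> Rx^2"
    unfolding power2_norm_eq_inner[symmetric] using N[of k] Rn by (auto intro: power_mono)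
  have "s k * (w \<bullet> x k) = c * (s k * \<beta> k * (x k \<bullet> x k) + s k * e)"
    unfolding w \<beta>_def[symmetric] inner_scaleR_left S by (simp add: algebra_simps)
  also have "s k * \<beta> k = lam k * \<sigma> k"
    unfolding \<beta>_def using s2[of k] by (metis mult.assoc mult.commute mult.right_neutral)
  moreover have "\<bar>s k * e\<bar> \<le> \<Lambda> * (real CARD('n) * D)" using e s[of k] by (auto simp: abs_mult)
  moreover have "lam k * \<gamma> * Rn^2 \<le> lam k * \<sigma> k * (x k \<bullet> x k)"
    using \<sigma>[of k] q lam(1)[of k] g by (intro mult_mono mult_left_mono) auto
  moreover have "lam k * \<sigma> k * (x k \<bullet> x k) \<le> lam k * Rx^2"
    using \<sigma>[of k] q lam(1)[of k] Rn
    by (intro mult_mono mult_left_le_one_le)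
       (auto intro: order_trans[OF zero_le_power2] simp: mult_left_le)
  ultimately show "c * (lam k * \<gamma> * Rn^2 - \<Lambda> * (real CARD('n) * D)) \<le> s k * (w \<bullet> x k)"
    and "s k * (w \<bullet> x k) \<le> c * (lam k * Rx^2 + \<Lambda> * (real CARD('n) * D))"
    using c by (auto intro!: mult_left_mono)
qed

lemma row_representation_zero:
  "row_representation c \<gamma> (\<lambda>_. 0) s x w \<Longrightarrow> w = 0"
  unfolding row_representation_def by auto

lemma row_representation_eq_signed_slope:
  assumes R: "row_representation c \<gamma> lam s x w"
    and S: "\<And>i. s i * (w \<bullet> x i) > 0" and s: "\<And>i. s i = 1 \<or> s i = -1"
  shows "w = c *\<^sub>R (\<Sum>i\<in>UNIV. (lam i * signed_slope \<gamma> (s i)) *\<^sub>R x i)"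
proof -
  obtain \<sigma> where w: "w = c *\<^sub>R (\<Sum>i\<in>UNIV. (lam i * s i * \<sigma> i) *\<^sub>R x i)"
    and \<sigma>: "\<And>i. (w \<bullet> x i > 0 \<longrightarrow> \<sigma> i = 1) \<and> (w \<bullet> x i < 0 \<longrightarrow> \<sigma> i = \<gamma>)"
    using R unfolding row_representation_def by blast
  have "s i * \<sigma> i = signed_slope \<gamma> (s i)" for i
    using s[of i] S[of i] \<sigma>[of i] by (auto simp: signed_slope_def zero_less_mult_iff)
  then show ?thesis using w by (simp add: mult.assoc)
qed

section \<open>Multipliers of a KKT point\<close>

lemma label_mult_net:
  fixes W :: "(real^'d^'m1::finite) \<times> (real^'d^'m2::finite)"
  defines "c \<equiv> 1 / sqrt (real (CARD('m1) + CARD('m2)))"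
  shows "s * net \<gamma> W \<xi> = c * (\<Sum>j\<in>UNIV. s * leaky \<gamma> (fst W $ j \<bullet> \<xi>))
            + c * (\<Sum>k\<in>UNIV. - s * leaky \<gamma> (snd W $ k \<bullet> \<xi>))"
  unfolding net_def c_def by (simp add: sum_distrib_left algebra_simps sum_negf)

lemma label_mult_net_ge:
  fixes W :: "(real^'d^'m1::finite) \<times> (real^'d^'m2::finite)"
  assumes s: "s = 1 \<or> s = -1" and g: "0 < \<gamma>" "\<gamma> < 1" and a: "0 < a"
    and rows: "\<And>j. a \<le> s * (fst W $ j \<bullet> \<xi>)" "\<And>k. a \<le> - s * (snd W $ k \<bullet> \<xi>)"
  shows "sqrt (real (CARD('m1) + CARD('m2))) * (\<gamma> * a) \<le> s * net \<gamma> W \<xi>"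
proof -
  define c where "c = 1 / sqrt (real (CARD('m1) + CARD('m2)))"
  have "0 < c" unfolding c_def by (simp add: add_pos_pos)
  have c_card: "c * (real CARD('m1) + real CARD('m2)) = sqrt (real (CARD('m1) + CARD('m2)))"
    unfolding c_def using real_div_sqrt[of "real CARD('m1) + real CARD('m2)"] by simp
  have "\<gamma> * a \<le> s * leaky \<gamma> (fst W $ j \<bullet> \<xi>)" for j
    using label_mult_leaky_ge[OF s _ g] rows(1)[of j] a g mult_left_mono[of a _ \<gamma>]
    by (meson less_le_trans less_imp_le order_trans)
  then have "real CARD('m1) * (\<gamma> * a) \<le> (\<Sum>j\<in>UNIV. s * leaky \<gamma> (fst W $ j \<bullet> \<xi>))"
    using sum_mono[of UNIV "\<lambda>_. \<gamma> * a"] by fastforce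
  moreover have "\<gamma> * a \<le> - s * leaky \<gamma> (snd W $ k \<bullet> \<xi>)" for k
  proof -
    have "- s = 1 \<or> - s = -1" using s by auto
    then show ?thesis
      using label_mult_leaky_ge[of "- s", OF _ _ g] rows(2)[of k] a g mult_left_mono[of a _ \<gamma>]
      by (meson less_le_trans less_imp_le order_trans)
  qed
  then have "real CARD('m2) * (\<gamma> * a) \<le> (\<Sum>k\<in>UNIV. - s * leaky \<gamma> (snd W $ k \<bullet> \<xi>))"
    using sum_mono[of UNIV "\<lambda>_. \<gamma> * a"] by fastforce
  ultimately have "c * ((real CARD('m1) + real CARD('m2)) * (\<gamma> * a)) \<le> s * net \<gamma> W \<xi>"
    unfolding label_mult_net c_def[symmetric] using \<open>0 < c\<close>
    by (simp add: distrib_right distrib_left mult_left_mono add_mono)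
  then show ?thesis by (metis c_card mult.assoc)
qed

lemma label_mult_net_le:
  fixes W :: "(real^'d^'m1::finite) \<times> (real^'d^'m2::finite)"
  assumes s: "s = 1 \<or> s = -1" and g: "0 < \<gamma>" "\<gamma> < 1" and b: "0 \<le> b"
    and rows: "\<And>j. s * (fst W $ j \<bullet> \<xi>) \<le> b" "\<And>k. - s * (snd W $ k \<bullet> \<xi>) \<le> b"
  shows "s * net \<gamma> W \<xi> \<le> sqrt (real (CARD('m1) + CARD('m2))) * b"
proof -
  define c where "c = 1 / sqrt (real (CARD('m1) + CARD('m2)))"
  have "0 < c" unfolding c_def by (simp add: add_pos_pos)
  have c_card: "c * (real CARD('m1) + real CARD('m2)) = sqrt (real (CARD('m1) + CARD('m2)))"
    unfolding c_def using real_div_sqrt[of "real CARD('m1) + real CARD('m2)"] by simp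
  have "s * leaky \<gamma> (fst W $ j \<bullet> \<xi>) \<le> b" for j
    using label_mult_leaky_le[OF s g, of "fst W $ j \<bullet> \<xi>"] rows(1)[of j] b by linarith
  then have "(\<Sum>j\<in>UNIV. s * leaky \<gamma> (fst W $ j \<bullet> \<xi>)) \<le> real CARD('m1) * b"
    using sum_mono[of UNIV _ "\<lambda>_. b"] by fastforce
  moreover have "- s * leaky \<gamma> (snd W $ k \<bullet> \<xi>) \<le> b" for k
    using label_mult_leaky_le[of "- s", OF _ g, of "snd W $ k \<bullet> \<xi>"] s rows(2)[of k] b by force
  then have "(\<Sum>k\<in>UNIV. - s * leaky \<gamma> (snd W $ k \<bullet> \<xi>)) \<le> real CARD('m2) * b"
    using sum_mono[of UNIV _ "\<lambda>_. b"] by fastforce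
  ultimately have "s * net \<gamma> W \<xi> \<le> c * ((real CARD('m1) + real CARD('m2)) * b)"
    unfolding label_mult_net c_def[symmetric] using \<open>0 < c\<close>
    by (simp add: distrib_right distrib_left mult_left_mono add_mono)
  then show ?thesis by (metis c_card mult.assoc)
qed

locale kkt_multipliers =
  fixes \<gamma> :: real and x :: "'n::finite \<Rightarrow> real^'d" and y :: "'n \<Rightarrow> real"
    and W :: "(real^'d^'m1::finite) \<times> (real^'d^'m2::finite)" and lam :: "'n \<Rightarrow> real"
    and c :: real
  assumes gamma_pos: "0 < \<gamma>" and gamma_lt_1: "\<gamma> < 1" and data: "data_hyp \<gamma> x y"
    and scale_eq: "c = 1 / sqrt (real (CARD('m1) + CARD('m2)))"
    and lam_nonneg: "\<And>i. 0 \<le> lam i"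
    and slack: "\<And>i. lam i * (1 - y i * net \<gamma> W (x i)) = 0"
    and feasible: "\<And>i. 1 \<le> y i * net \<gamma> W (x i)"
    and fst_rows: "\<And>j. row_representation c \<gamma> lam y x (fst W $ j)"
    and snd_rows: "\<And>k. row_representation c \<gamma> lam (\<lambda>i. - y i) x (snd W $ k)"
begin

lemma label: "y i = 1 \<or> y i = -1"
  using data by (simp add: data_hyp_def)

lemma neg_label: "- y i = 1 \<or> - y i = -1"
  using label[of i] by auto

lemma scale_pos: "0 < c"
  by (simp add: scale_eq add_pos_pos)

lemma scale_sqrt: "sqrt (real (CARD('m1) + CARD('m2))) * c = 1"
  using add_pos_pos[of "real CARD('m1)" "real CARD('m2)"] by (simp add: scale_eq)

lemma Rmin_pos: "0 < Rmin x"
  using data by (intro Rmin_pos_of_nonzero) (auto simp: data_hyp_def)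

lemma Rmin_le_Rmax: "Rmin x \<le> Rmax x"
  using Rmin_le_norm norm_le_Rmax by (rule order_trans)

lemma Rmax_pos: "0 < Rmax x"
  using Rmin_pos Rmin_le_Rmax by linarith

definition lam_max :: real where
  "lam_max = Max (range lam)"

lemma lam_le_max: "lam i \<le> lam_max"
  unfolding lam_max_def by (rule Max_ge) auto

text \<open>The hypothesis \<open>data_hyp\<close> bounds the total cross-correlation \<open>n max\<^sub>i\<^sub>\<noteq>\<^sub>j \<bar>x\<^sub>i \<bullet> x\<^sub>j\<bar>\<close>
  by \<open>coupling\<close>, which is small against \<open>\<gamma> Rmin\<^sup>2\<close>.\<close>
definition coupling :: real where
  "coupling = \<gamma>^3 * Rmin x^4 / (3 * Rmax x^2)"

lemma coupling_nonneg: "0 \<le> coupling"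
  using gamma_pos by (simp add: coupling_def)

lemma coupling_lt: "coupling < \<gamma> * Rmin x^2 / 3"
proof -
  have "Rmin x^2 * Rmin x^2 \<le> Rmin x^2 * Rmax x^2"
    using power_mono[OF Rmin_le_Rmax, of 2] Rmin_pos by (intro mult_left_mono) auto
  then have "Rmin x^4 / Rmax x^2 \<le> Rmin x^2"
    using Rmax_pos by (simp add: divide_le_eq power4_eq_xxxx power2_eq_square mult.assoc)
  have "\<gamma> * \<gamma> < 1 * 1" using gamma_pos gamma_lt_1 by (intro mult_strict_mono) auto
  then have "\<gamma>^3 < \<gamma>" using gamma_pos by (simp add: power3_eq_cube)
  have "coupling = (\<gamma>^3 / 3) * (Rmin x^4 / Rmax x^2)" by (simp add: coupling_def)
  also have "\<dots> \<le> (\<gamma>^3 / 3) * Rmin x^2"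
    using \<open>Rmin x^4 / Rmax x^2 \<le> Rmin x^2\<close> gamma_pos by (intro mult_left_mono) auto
  also have "\<dots> < (\<gamma> / 3) * Rmin x^2"
    using \<open>\<gamma>^3 < \<gamma>\<close> Rmin_pos by (intro mult_strict_right_mono) auto
  finally show ?thesis by simp
qed

lemma row_margin_bounds:
  "c * (lam i * \<gamma> * Rmin x^2 - lam_max * coupling) \<le> y i * (fst W $ j \<bullet> x i)"
  "y i * (fst W $ j \<bullet> x i) \<le> c * (lam i * Rmax x^2 + lam_max * coupling)"
  "c * (lam i * \<gamma> * Rmin x^2 - lam_max * coupling) \<le> - y i * (snd W $ k \<bullet> x i)"
  "- y i * (snd W $ k \<bullet> x i) \<le> c * (lam i * Rmax x^2 + lam_max * coupling)"
proof -
  define D where "D = \<gamma>^3 * Rmin x^4 / (3 * Rmax x^2 * real CARD('n))"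
  have X: "\<And>i j. i \<noteq> j \<Longrightarrow> \<bar>x i \<bullet> x j\<bar> \<le> D"
    unfolding D_def using data_hyp_inner_le[OF data gamma_pos] .
  have "real CARD('n) * D = coupling" unfolding D_def coupling_def by simp
  moreover have "0 \<le> D" unfolding D_def using gamma_pos by simp
  note bounds = row_representation_margin_bounds[where x=x and lam=lam and \<Lambda>=lam_max and
      Rn="Rmin x" and Rx="Rmax x", OF _ scale_pos gamma_pos gamma_lt_1 _
      lam_nonneg lam_le_max X \<open>0 \<le> D\<close> Rmin_le_norm norm_le_Rmax less_imp_le[OF Rmin_pos]]
  ultimately show
    "c * (lam i * \<gamma> * Rmin x^2 - lam_max * coupling) \<le> y i * (fst W $ j \<bullet> x i)"
    "y i * (fst W $ j \<bullet> x i) \<le> c * (lam i * Rmax x^2 + lam_max * coupling)"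
    "c * (lam i * \<gamma> * Rmin x^2 - lam_max * coupling) \<le> - y i * (snd W $ k \<bullet> x i)"
    "- y i * (snd W $ k \<bullet> x i) \<le> c * (lam i * Rmax x^2 + lam_max * coupling)"
    using bounds[OF fst_rows label] bounds[OF snd_rows neg_label] by simp_all
qed

lemma lam_max_pos: "0 < lam_max"
proof (rule ccontr)
  assume "\<not> 0 < lam_max"
  then have "lam i = 0" for i using lam_le_max[of i] lam_nonneg[of i] by linarith
  then have "lam = (\<lambda>_. 0)" by blast
  then have "fst W $ j = 0" "snd W $ k = 0" for j k
    using fst_rows snd_rows row_representation_zero by metis+
  then have "net \<gamma> W (x i) = 0" for i unfolding net_def by simp
  then show False using feasible[of undefined] by simp
qed

text \<open>The constraint of the largest multiplier is active; comparing with the lower bound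
  on its margin bounds that multiplier.\<close>
lemma lam_max_lt: "lam_max < 3 / (2 * \<gamma>^2 * Rmin x^2)"
proof -
  have "lam_max \<in> range lam" unfolding lam_max_def by (rule Max_in) auto
  then obtain k where k: "lam k = lam_max" by auto
  have tight: "y k * net \<gamma> W (x k) = 1" using slack[of k] k lam_max_pos by simp
  define a where "a = c * (lam_max * (\<gamma> * Rmin x^2 - coupling))"
  have "0 < \<gamma> * Rmin x^2 - coupling" using coupling_lt coupling_nonneg by linarith
  then have "0 < a" unfolding a_def using scale_pos lam_max_pos by simp
  moreover have "a \<le> y k * (fst W $ j \<bullet> x k)" "a \<le> - y k * (snd W $ j' \<bullet> x k)" for j j'
    using row_margin_bounds(1,3)[of k] k unfolding a_def by (simp_all add: algebra_simps)
  ultimately have "sqrt (real (CARD('m1) + CARD('m2))) * (\<gamma> * a) \<le> 1"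
    using label_mult_net_ge[OF label gamma_pos gamma_lt_1] tight by metis
  moreover have "sqrt (real (CARD('m1) + CARD('m2))) * (\<gamma> * a)
      = \<gamma> * lam_max * (\<gamma> * Rmin x^2 - coupling) * (sqrt (real (CARD('m1) + CARD('m2))) * c)"
    unfolding a_def by (simp only: ac_simps)
  ultimately have "\<gamma> * lam_max * (\<gamma> * Rmin x^2 - coupling) \<le> 1"
    unfolding scale_sqrt by (simp only: mult_1_right)
  moreover have "\<gamma> * lam_max * (2/3 * (\<gamma> * Rmin x^2)) < \<gamma> * lam_max * (\<gamma> * Rmin x^2 - coupling)"
    using coupling_lt gamma_pos lam_max_pos by (intro mult_strict_left_mono) auto
  ultimately have "(2 * \<gamma>^2 * Rmin x^2) * lam_max < 3"
    by (simp add: power2_eq_square algebra_simps)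
  then show ?thesis using gamma_pos Rmin_pos by (simp add: less_divide_eq mult.commute)
qed

lemma lam_max_coupling_lt: "lam_max * coupling < \<gamma> * Rmin x^2 / (2 * Rmax x^2)"
proof -
  have "0 < coupling" unfolding coupling_def using gamma_pos Rmin_pos Rmax_pos by simp
  then have "lam_max * coupling < 3 / (2 * \<gamma>^2 * Rmin x^2) * coupling"
    using lam_max_lt by (rule mult_strict_right_mono[rotated])
  also have "\<dots> = \<gamma> * Rmin x^2 / (2 * Rmax x^2)"
    unfolding coupling_def using gamma_pos Rmin_pos Rmax_pos
    by (simp add: field_simps power2_eq_square power3_eq_cube power4_eq_xxxx)
  finally show ?thesis .
qed

lemma lam_gt: "1 / (2 * Rmax x^2) < lam i"
proof -
  define b where "b = c * (lam i * Rmax x^2 + lam_max * coupling)"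
  have "0 \<le> b" unfolding b_def using scale_pos lam_nonneg[of i] lam_max_pos coupling_nonneg by simp
  then have "1 \<le> sqrt (real (CARD('m1) + CARD('m2))) * b"
    using label_mult_net_le[OF label[of i] gamma_pos gamma_lt_1 \<open>0 \<le> b\<close>]
      row_margin_bounds(2,4)[of i] feasible[of i] unfolding b_def by (meson order_trans)
  then have "1 \<le> lam i * Rmax x^2 + lam_max * coupling"
    using scale_sqrt unfolding b_def by (simp add: mult.assoc[symmetric])
  moreover have "\<gamma> * Rmin x^2 / (2 * Rmax x^2) < 1/2"
  proof -
    have "\<gamma> * Rmin x^2 < 1 * Rmin x^2" using gamma_lt_1 Rmin_pos by (intro mult_strict_right_mono) auto
    also have "\<dots> \<le> Rmax x^2" using power_mono[OF Rmin_le_Rmax, of 2] Rmin_pos by simp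
    finally show ?thesis using Rmax_pos by (simp add: divide_less_eq)
  qed
  ultimately have "1/2 < lam i * Rmax x^2" using lam_max_coupling_lt by linarith
  then show ?thesis using Rmax_pos by (simp add: divide_less_eq mult.commute)
qed

lemma lam_pos: "0 < lam i"
  using lam_gt[of i] Rmax_pos by (meson divide_pos_pos zero_less_numeral zero_less_one
      zero_less_power mult_pos_pos less_trans)

lemma lam_lt: "lam i < 3 / (2 * \<gamma>^2 * Rmin x^2)"
  using lam_le_max lam_max_lt by (rule le_less_trans)

lemma tight: "y i * net \<gamma> W (x i) = 1"
  using slack[of i] lam_pos[of i] by simp

lemma row_signs: "0 < y i * (fst W $ j \<bullet> x i)" "0 < - y i * (snd W $ k \<bullet> x i)"
proof -
  have "\<gamma> * Rmin x^2 / (2 * Rmax x^2) < lam i * \<gamma> * Rmin x^2"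
    using mult_strict_right_mono[OF lam_gt[of i], of "\<gamma> * Rmin x^2"] gamma_pos Rmin_pos
    by (simp add: mult.assoc)
  then have "0 < c * (lam i * \<gamma> * Rmin x^2 - lam_max * coupling)"
    using lam_max_coupling_lt scale_pos by simp
  then show "0 < y i * (fst W $ j \<bullet> x i)" "0 < - y i * (snd W $ k \<bullet> x i)"
    using row_margin_bounds(1,3)[of i] by (meson less_le_trans)+
qed

end

lemma kkt_multipliers_exist:
  fixes x :: "'n::finite \<Rightarrow> real^'d" and W :: "(real^'d^'m1::finite) \<times> (real^'d^'m2::finite)"
  assumes "0 < \<gamma> \<and> \<gamma> < 1 \<and> data_hyp \<gamma> x y \<and> kkt_point P_obj (P_cons \<gamma> x y) W"
  obtains lam where "kkt_multipliers \<gamma> x y W lam (1 / sqrt (real (CARD('m1) + CARD('m2))))"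
proof -
  from assms have y: "\<And>i. y i = 1 \<or> y i = -1" and x: "\<And>i. x i \<noteq> 0"
    by (auto simp: data_hyp_def)
  from assms obtain lam where lam: "\<And>i. 0 \<le> lam i" "\<And>i. lam i * (1 - y i * net \<gamma> W (x i)) = 0"
    "\<And>i. 1 \<le> y i * net \<gamma> W (x i)"
    "\<And>j. row_representation (1 / sqrt (real (CARD('m1) + CARD('m2)))) \<gamma> lam y x (fst W $ j)"
    "\<And>k. row_representation (1 / sqrt (real (CARD('m1) + CARD('m2)))) \<gamma> lam (\<lambda>i. - y i) x (snd W $ k)"
    using kkt_point_row_representation[where x=x and y=y and W=W and \<gamma>=\<gamma>, OF _ y x] by blast
  have "kkt_multipliers \<gamma> x y W lam (1 / sqrt (real (CARD('m1) + CARD('m2))))"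
    by unfold_locales (use assms lam in auto)
  then show thesis by (rule that)
qed

section \<open>The Lagrangian of (P) row by row\<close>

definition row_lagrangian :: "real \<Rightarrow> real \<Rightarrow> ('n::finite \<Rightarrow> real) \<Rightarrow> ('n \<Rightarrow> real) \<Rightarrow>
    ('n \<Rightarrow> 'a::real_inner) \<Rightarrow> 'a \<Rightarrow> real" where
  "row_lagrangian c \<gamma> lam s x w = (1/2) * (norm w)^2 - c * (\<Sum>i\<in>UNIV. lam i * s i * leaky \<gamma> (w \<bullet> x i))"

lemma norm_sum_scaleR_sq_diff:
  fixes x :: "'n::finite \<Rightarrow> 'a::real_inner"
  shows "(norm (\<Sum>i\<in>UNIV. \<alpha> i *\<^sub>R x i))^2 - (norm (\<Sum>i\<in>UNIV. \<alpha>' i *\<^sub>R x i))^2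
     = (\<Sum>i\<in>UNIV. (\<alpha> i - \<alpha>' i) * ((\<Sum>k\<in>UNIV. (\<alpha> k + \<alpha>' k) *\<^sub>R x k) \<bullet> x i))"
proof -
  define A where "A = (\<Sum>i\<in>UNIV. \<alpha> i *\<^sub>R x i)"
  define B where "B = (\<Sum>i\<in>UNIV. \<alpha>' i *\<^sub>R x i)"
  have "(norm A)^2 - (norm B)^2 = (A - B) \<bullet> (A + B)"
    by (simp add: power2_norm_eq_inner inner_diff_left inner_diff_right inner_add_left
        inner_add_right inner_commute)
  also have "A - B = (\<Sum>i\<in>UNIV. (\<alpha> i - \<alpha>' i) *\<^sub>R x i)"
    unfolding A_def B_def by (simp add: sum_subtractf[symmetric] scaleR_diff_left)
  also have "A + B = (\<Sum>k\<in>UNIV. (\<alpha> k + \<alpha>' k) *\<^sub>R x k)"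
    unfolding A_def B_def by (simp add: sum.distrib[symmetric] scaleR_add_left)
  finally show ?thesis unfolding A_def B_def by (simp add: inner_sum_left inner_commute)
qed

lemma norm_sum_scaleR_le_of_gap:
  fixes x :: "'n::finite \<Rightarrow> 'a::real_inner" and \<alpha> \<alpha>' :: "'n \<Rightarrow> real"
  defines "S \<equiv> (\<Sum>k\<in>UNIV. (\<alpha> k + \<alpha>' k) *\<^sub>R x k)"
  assumes gap: "\<And>i. 0 \<le> \<alpha> i - \<alpha>' i" and gap_pos: "\<And>i. \<alpha> i \<noteq> \<alpha>' i \<Longrightarrow> 0 < S \<bullet> x i"
  shows "(norm (\<Sum>i\<in>UNIV. \<alpha>' i *\<^sub>R x i))^2 \<le> (norm (\<Sum>i\<in>UNIV. \<alpha> i *\<^sub>R x i))^2"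
    and "(norm (\<Sum>i\<in>UNIV. \<alpha>' i *\<^sub>R x i))^2 = (norm (\<Sum>i\<in>UNIV. \<alpha> i *\<^sub>R x i))^2 \<Longrightarrow> \<alpha>' = \<alpha>"
proof -
  have term_pos: "\<alpha> i \<noteq> \<alpha>' i \<Longrightarrow> 0 < (\<alpha> i - \<alpha>' i) * (S \<bullet> x i)" for i
    using gap[of i] gap_pos[of i] by simp
  have term_nonneg: "0 \<le> (\<alpha> i - \<alpha>' i) * (S \<bullet> x i)" for i
    using term_pos[of i] by (cases "\<alpha> i = \<alpha>' i") auto
  note diff = norm_sum_scaleR_sq_diff[of \<alpha> x \<alpha>', folded S_def]
  show "(norm (\<Sum>i\<in>UNIV. \<alpha>' i *\<^sub>R x i))^2 \<le> (norm (\<Sum>i\<in>UNIV. \<alpha> i *\<^sub>R x i))^2"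
  proof -
    have "0 \<le> (\<Sum>i\<in>UNIV. (\<alpha> i - \<alpha>' i) * (S \<bullet> x i))" by (rule sum_nonneg) (rule term_nonneg)
    then show ?thesis using diff by linarith
  qed
  assume "(norm (\<Sum>i\<in>UNIV. \<alpha>' i *\<^sub>R x i))^2 = (norm (\<Sum>i\<in>UNIV. \<alpha> i *\<^sub>R x i))^2"
  then have "(\<Sum>i\<in>UNIV. (\<alpha> i - \<alpha>' i) * (S \<bullet> x i)) = 0" using diff by simp
  moreover have "0 < (\<Sum>i\<in>UNIV. (\<alpha> i - \<alpha>' i) * (S \<bullet> x i))" if "\<alpha> i \<noteq> \<alpha>' i" for i
    using term_nonneg term_pos[OF that] by (intro sum_pos2[where i=i]) auto
  ultimately show "\<alpha>' = \<alpha>" by fastforce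
qed

lemma row_lagrangian_ge_shifted:
  fixes x :: "'n::finite \<Rightarrow> 'a::real_inner"
  assumes "\<And>i. lam i * s i * leaky \<gamma> (w \<bullet> x i) \<le> \<alpha> i * (w \<bullet> x i)" and "0 \<le> c"
  defines "C \<equiv> c *\<^sub>R (\<Sum>i\<in>UNIV. \<alpha> i *\<^sub>R x i)"
  shows "(1/2) * (norm (w - C))^2 - (1/2) * (norm C)^2 \<le> row_lagrangian c \<gamma> lam s x w"
proof -
  have "c * (\<Sum>i\<in>UNIV. lam i * s i * leaky \<gamma> (w \<bullet> x i)) \<le> c * (\<Sum>i\<in>UNIV. \<alpha> i * (w \<bullet> x i))"
    using assms(1,2) by (intro mult_left_mono sum_mono) auto
  also have "\<dots> = w \<bullet> C" unfolding C_def by (simp add: inner_sum_right)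
  finally have "c * (\<Sum>i\<in>UNIV. lam i * s i * leaky \<gamma> (w \<bullet> x i)) \<le> w \<bullet> C" .
  moreover have "(norm (w - C))^2 = (norm w)^2 - 2 * (w \<bullet> C) + (norm C)^2"
    by (simp add: power2_norm_eq_inner inner_diff_left inner_diff_right inner_commute)
  ultimately show ?thesis unfolding row_lagrangian_def by linarith
qed

lemma row_lagrangian_at_critical:
  fixes x :: "'n::finite \<Rightarrow> 'a::real_inner"
  assumes V: "V = c *\<^sub>R (\<Sum>i\<in>UNIV. (lam i * signed_slope \<gamma> (s i)) *\<^sub>R x i)"
    and S: "\<And>i. s i * (V \<bullet> x i) > 0" and s: "\<And>i. s i = 1 \<or> s i = -1" and g: "\<gamma> \<le> 1"
  shows "row_lagrangian c \<gamma> lam s x V = - (1/2) * (norm V)^2"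
proof -
  have "c * (\<Sum>i\<in>UNIV. lam i * s i * leaky \<gamma> (V \<bullet> x i))
      = c * (\<Sum>i\<in>UNIV. lam i * signed_slope \<gamma> (s i) * (V \<bullet> x i))"
    using label_mult_leaky_eq[OF s S g] by (simp add: mult.assoc)
  also have "\<dots> = V \<bullet> V" by (subst (2) V) (simp add: inner_sum_right sum_distrib_left)
  finally show ?thesis unfolding row_lagrangian_def by (simp add: power2_norm_eq_inner)
qed

text \<open>Replacing each term \<open>s\<^sub>i leaky(w \<bullet> x\<^sub>i)\<close> by a linear minorant turns the row Lagrangian into
  \<open>\<onehalf>|w - C|\<^sup>2 - \<onehalf>|C|\<^sup>2\<close>; the minorants only differ from those at \<open>V\<close> where \<open>s\<^sub>i = 1\<close> but
  \<open>w \<bullet> x\<^sub>i < 0\<close>, and near-orthogonality then forces \<open>|C| \<le> |V|\<close>.\<close>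
lemma row_lagrangian_min:
  fixes x :: "'n::finite \<Rightarrow> 'a::real_inner"
  assumes g: "0 < \<gamma>" "\<gamma> < 1" and c: "c > 0" and s: "\<And>i. s i = 1 \<or> s i = -1"
    and lam: "\<And>i. 0 < lam i" "\<And>i. lam i \<le> Lm"
    and X: "\<And>i j. i \<noteq> j \<Longrightarrow> \<bar>x i \<bullet> x j\<bar> \<le> D" and D0: "0 \<le> D"
    and N: "\<And>i. Rn^2 \<le> x i \<bullet> x i"
    and key: "\<And>i. 2 * Lm * (real CARD('n) * D) < (1 + \<gamma>) * lam i * Rn^2"
  defines "V \<equiv> c *\<^sub>R (\<Sum>i\<in>UNIV. (lam i * signed_slope \<gamma> (s i)) *\<^sub>R x i)"
  shows "- (1/2) * (norm V)^2 \<le> row_lagrangian c \<gamma> lam s x w"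
    and "row_lagrangian c \<gamma> lam s x w = - (1/2) * (norm V)^2 \<Longrightarrow> w = V"
proof -
  define \<alpha> where "\<alpha> i = lam i * signed_slope \<gamma> (s i)" for i
  define \<alpha>' where "\<alpha>' i = (if s i = 1 then lam i * (if w \<bullet> x i \<ge> 0 then 1 else \<gamma>) else - \<gamma> * lam i)"
    for i
  define C where "C = c *\<^sub>R (\<Sum>i\<in>UNIV. \<alpha>' i *\<^sub>R x i)"
  define S where "S = (\<Sum>k\<in>UNIV. (\<alpha> k + \<alpha>' k) *\<^sub>R x k)"
  have "lam i * s i * leaky \<gamma> (w \<bullet> x i) \<le> \<alpha>' i * (w \<bullet> x i)" for i
    using s[of i] g lam(1)[of i] mult_left_mono[OF leaky_ge_scale, of "lam i" \<gamma> "w \<bullet> x i"]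
    by (auto simp: \<alpha>'_def leaky_nonneg leaky_nonpos algebra_simps)
  then have lower: "(1/2) * (norm (w - C))^2 - (1/2) * (norm C)^2 \<le> row_lagrangian c \<gamma> lam s x w"
    unfolding C_def using c by (intro row_lagrangian_ge_shifted) auto
  have gap: "0 \<le> \<alpha> i - \<alpha>' i" and gap_pos: "\<alpha> i \<noteq> \<alpha>' i \<Longrightarrow> 0 < S \<bullet> x i" for i
  proof -
    show "0 \<le> \<alpha> i - \<alpha>' i"
      using g lam(1)[of i] by (auto simp: \<alpha>_def \<alpha>'_def signed_slope_def intro: mult_left_le)
    assume "\<alpha> i \<noteq> \<alpha>' i"
    then have "\<alpha> i + \<alpha>' i = (1 + \<gamma>) * lam i"
      by (auto simp: \<alpha>_def \<alpha>'_def signed_slope_def algebra_simps split: if_splits)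
    then have diag: "(1 + \<gamma>) * lam i * Rn^2 \<le> (\<alpha> i + \<alpha>' i) * (x i \<bullet> x i)"
      using N[of i] g lam(1)[of i] by (simp add: mult_left_mono)
    have bound: "\<bar>\<alpha> k + \<alpha>' k\<bar> \<le> 2 * Lm" for k
    proof -
      have "\<bar>\<alpha> k\<bar> \<le> lam k" "\<bar>\<alpha>' k\<bar> \<le> lam k"
        using g lam(1)[of k] by (auto simp: \<alpha>_def \<alpha>'_def signed_slope_def abs_mult
            intro: mult_left_le mult_left_le_one_le)
      then show ?thesis using lam(2)[of k] by linarith
    qed
    have "\<bar>S \<bullet> x i - (\<alpha> i + \<alpha>' i) * (x i \<bullet> x i)\<bar> \<le> 2 * Lm * (real CARD('n) * D)"
      unfolding S_def
      using inner_sum_scaleR_offdiag_bound[where x=x and \<beta>="\<lambda>k. \<alpha> k + \<alpha>' k" and Bd="2 * Lm"]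
        X bound D0 by blast
    then show "0 < S \<bullet> x i" using diag key[of i] by linarith
  qed
  note cmp = norm_sum_scaleR_le_of_gap[OF gap gap_pos[unfolded S_def]]
  have norms: "(norm C)^2 = c^2 * (norm (\<Sum>i\<in>UNIV. \<alpha>' i *\<^sub>R x i))^2"
    "(norm V)^2 = c^2 * (norm (\<Sum>i\<in>UNIV. \<alpha> i *\<^sub>R x i))^2"
    unfolding C_def V_def \<alpha>_def[symmetric] using c by (simp_all add: power_mult_distrib)
  then have CV: "(norm C)^2 \<le> (norm V)^2"
    using cmp(1) by (simp add: mult_left_mono)
  show "- (1/2) * (norm V)^2 \<le> row_lagrangian c \<gamma> lam s x w"
    using lower CV zero_le_power2[of "norm (w - C)"] by linarith
  assume eq: "row_lagrangian c \<gamma> lam s x w = - (1/2) * (norm V)^2"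
  then have "(norm (w - C))^2 \<le> (norm C)^2 - (norm V)^2" using lower by linarith
  then have "(norm (w - C))^2 = 0" and "(norm C)^2 = (norm V)^2"
    using CV zero_le_power2[of "norm (w - C)"] by linarith+
  then have "w = C" by simp
  have "\<alpha>' = \<alpha>"
    using cmp(2) norms \<open>(norm C)^2 = (norm V)^2\<close> c by simp
  then show "w = V" unfolding \<open>w = C\<close> C_def V_def \<alpha>_def[symmetric] by simp
qed

lemma norm_prod_vec_sq:
  fixes W :: "(real^'d^'m1::finite) \<times> (real^'d^'m2::finite)"
  shows "(norm W)^2 = (\<Sum>j\<in>UNIV. (norm (fst W $ j))^2) + (\<Sum>k\<in>UNIV. (norm (snd W $ k))^2)"
  unfolding norm_Pair[of "fst W" "snd W", unfolded prod.collapse] norm_vec_def L2_set_def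
  by (simp add: sum_nonneg)

lemma half_sqnorm_eq_lagrangian:
  fixes W :: "(real^'d^'m1::finite) \<times> (real^'d^'m2::finite)" and x :: "'n::finite \<Rightarrow> real^'d"
  defines "c \<equiv> 1 / sqrt (real (CARD('m1) + CARD('m2)))"
  shows "(1/2) * (norm W)^2 = (\<Sum>j\<in>UNIV. row_lagrangian c \<gamma> lam y x (fst W $ j))
     + (\<Sum>k\<in>UNIV. row_lagrangian c \<gamma> lam (\<lambda>i. - y i) x (snd W $ k))
     + (\<Sum>i\<in>UNIV. lam i * (y i * net \<gamma> W (x i)))"
proof -
  have "(\<Sum>i\<in>UNIV. lam i * (y i * net \<gamma> W (x i)))
      = (\<Sum>i\<in>UNIV. \<Sum>j\<in>UNIV. c * (lam i * y i * leaky \<gamma> (fst W $ j \<bullet> x i)))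
      + (\<Sum>i\<in>UNIV. \<Sum>k\<in>UNIV. c * (lam i * - y i * leaky \<gamma> (snd W $ k \<bullet> x i)))"
    unfolding label_mult_net c_def[symmetric]
    by (simp add: distrib_left sum.distrib sum_distrib_left ac_simps)
  also have "\<dots> = (\<Sum>j\<in>UNIV. c * (\<Sum>i\<in>UNIV. lam i * y i * leaky \<gamma> (fst W $ j \<bullet> x i)))
      + (\<Sum>k\<in>UNIV. c * (\<Sum>i\<in>UNIV. lam i * - y i * leaky \<gamma> (snd W $ k \<bullet> x i)))"
    by (subst (1 2) sum.swap) (simp add: sum_distrib_left)
  finally show ?thesis
    unfolding row_lagrangian_def norm_prod_vec_sq
    by (simp add: sum_subtractf sum_distrib_left sum_divide_distrib[symmetric])
qed

text \<open>Weak duality, using that the Lagrangian splits into one row Lagrangian per hidden unit.\<close>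
lemma P_global_opt_of_row_minimizers:
  fixes W :: "(real^'d^'m1::finite) \<times> (real^'d^'m2::finite)" and x :: "'n::finite \<Rightarrow> real^'d"
    and y lam :: "'n \<Rightarrow> real" and \<gamma> :: real
  defines "c \<equiv> 1 / sqrt (real (CARD('m1) + CARD('m2)))"
  defines "hv \<equiv> row_lagrangian c \<gamma> lam y x" and "hu \<equiv> row_lagrangian c \<gamma> lam (\<lambda>i. - y i) x"
  assumes lam: "\<And>i. 0 \<le> lam i" and tight: "\<And>i. y i * net \<gamma> W (x i) = 1"
    and rows: "\<And>j. fst W $ j = v" "\<And>k. snd W $ k = u"
    and v_min: "\<And>w. hv v \<le> hv w" "\<And>w. hv w = hv v \<Longrightarrow> w = v"
    and u_min: "\<And>w. hu u \<le> hu w" "\<And>w. hu w = hu u \<Longrightarrow> w = u"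
  shows "P_global_opt \<gamma> x y W" and "P_global_opt \<gamma> x y W' \<Longrightarrow> W' = W"
proof -
  have gap: "P_obj W' - P_obj W =
      (\<Sum>j\<in>UNIV. hv (fst W' $ j) - hv v) + (\<Sum>k\<in>UNIV. hu (snd W' $ k) - hu u)
      + (\<Sum>i\<in>UNIV. lam i * (y i * net \<gamma> W' (x i) - 1))" for W' :: "(real^'d^'m1) \<times> (real^'d^'m2)"
    using half_sqnorm_eq_lagrangian[of W' \<gamma> lam y x] half_sqnorm_eq_lagrangian[of W \<gamma> lam y x]
    unfolding P_obj_def c_def[symmetric] hv_def[symmetric] hu_def[symmetric] rows tight
    by (simp only: sum_subtractf right_diff_distrib mult_1_right)
  have row_gaps: "0 \<le> (\<Sum>j\<in>UNIV. hv (fst W' $ j) - hv v)" "0 \<le> (\<Sum>k\<in>UNIV. hu (snd W' $ k) - hu u)"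
    for W' :: "(real^'d^'m1) \<times> (real^'d^'m2)"
    using v_min(1) u_min(1) by (simp_all add: sum_nonneg)
  have constraint_gaps: "0 \<le> lam i * (y i * net \<gamma> W' (x i) - 1)" if "P_feasible \<gamma> x y W'" for W' i
    using that lam[of i] unfolding P_feasible_def by simp
  have feasible: "P_feasible \<gamma> x y W" unfolding P_feasible_def using tight by simp
  show "P_global_opt \<gamma> x y W"
    unfolding P_global_opt_def
  proof (intro conjI allI impI feasible)
    fix W' :: "(real^'d^'m1) \<times> (real^'d^'m2)"
    assume "P_feasible \<gamma> x y W'"
    then have "0 \<le> (\<Sum>i\<in>UNIV. lam i * (y i * net \<gamma> W' (x i) - 1))"
      by (simp add: constraint_gaps sum_nonneg)
    then show "P_obj W \<le> P_obj W'" using gap[of W'] row_gaps[of W'] by linarith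
  qed
  assume "P_global_opt \<gamma> x y W'"
  then have "P_feasible \<gamma> x y W'" "P_obj W' \<le> P_obj W"
    using feasible unfolding P_global_opt_def by blast+
  moreover have "0 \<le> (\<Sum>i\<in>UNIV. lam i * (y i * net \<gamma> W' (x i) - 1))"
    using constraint_gaps[OF \<open>P_feasible \<gamma> x y W'\<close>] by (simp add: sum_nonneg)
  ultimately have "(\<Sum>j\<in>UNIV. hv (fst W' $ j) - hv v) = 0" "(\<Sum>k\<in>UNIV. hu (snd W' $ k) - hu u) = 0"
    using gap[of W'] row_gaps[of W'] by linarith+
  then have "hv (fst W' $ j) = hv v" "hu (snd W' $ k) = hu u" for j k
    using sum_nonneg_eq_0_iff[of UNIV "\<lambda>j. hv (fst W' $ j) - hv v"]
      sum_nonneg_eq_0_iff[of UNIV "\<lambda>k. hu (snd W' $ k) - hu u"] v_min(1) u_min(1) by simp_all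
  then have "fst W' $ j = fst W $ j" "snd W' $ k = snd W $ k" for j k
    using v_min(2) u_min(2) rows by metis+
  then show "W' = W" by (simp add: prod_eq_iff vec_eq_iff)
qed

section \<open>The reduced convex problem\<close>

text \<open>The multipliers make the objective grow at least quadratically in every feasible direction.\<close>
lemma cvx_global_opt_of_multipliers:
  fixes v u :: "real^'d" and x :: "'n::finite \<Rightarrow> real^'d" and m1 m2 :: nat
  defines "c \<equiv> 1 / sqrt (real (m1 + m2))"
  assumes m: "0 < m1" "0 < m2" and y: "\<And>i. y i = 1 \<or> y i = -1" and lam: "\<And>i. 0 \<le> lam i"
    and v: "v = c *\<^sub>R (\<Sum>i\<in>UNIV. (lam i * signed_slope \<gamma> (y i)) *\<^sub>R x i)"
    and u: "u = c *\<^sub>R (\<Sum>i\<in>UNIV. (lam i * signed_slope \<gamma> (- y i)) *\<^sub>R x i)"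
    and active_pos: "\<And>i. y i = 1 \<Longrightarrow> real m1 / sqrt (real (m1 + m2)) * (v \<bullet> x i)
        - \<gamma> * (real m2 / sqrt (real (m1 + m2))) * (u \<bullet> x i) = 1"
    and active_neg: "\<And>i. y i = -1 \<Longrightarrow> real m2 / sqrt (real (m1 + m2)) * (u \<bullet> x i)
        - \<gamma> * (real m1 / sqrt (real (m1 + m2))) * (v \<bullet> x i) = 1"
  shows "cvx_global_opt m1 m2 \<gamma> x y v u"
    and "cvx_global_opt m1 m2 \<gamma> x y v' u' \<Longrightarrow> v' = v \<and> u' = u"
proof -
  define a where "a = real m1 * c"
  define b where "b = real m2 * c"
  define G where "G i p q = (if y i = 1 then a * (p \<bullet> x i) - \<gamma> * b * (q \<bullet> x i)
                             else b * (q \<bullet> x i) - \<gamma> * a * (p \<bullet> x i))" for i and p q :: "real^'d"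
  have feasible_iff: "cvx_feasible m1 m2 \<gamma> x y p q \<longleftrightarrow> (\<forall>i. 1 \<le> G i p q)" for p q
    unfolding cvx_feasible_def G_def a_def b_def c_def using y by (auto simp: mult.assoc)
  have active: "G i v u = 1" for i
    using active_pos[of i] active_neg[of i] y[of i]
    unfolding G_def a_def b_def c_def by (auto simp: mult.assoc)
  have G_diff: "G i p' q' - G i p q = G i (p' - p) (q' - q)" for i p q p' q'
    unfolding G_def by (simp add: inner_diff_left algebra_simps)
  have stationary: "real m1 * (v \<bullet> dv) + real m2 * (u \<bullet> du) = (\<Sum>i\<in>UNIV. lam i * G i dv du)" for dv du
  proof -
    have "real m1 * (v \<bullet> dv) = (\<Sum>i\<in>UNIV. lam i * signed_slope \<gamma> (y i) * a * (x i \<bullet> dv))"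
      unfolding v a_def by (simp add: inner_sum_left sum_distrib_left algebra_simps)
    moreover have "real m2 * (u \<bullet> du) = (\<Sum>i\<in>UNIV. lam i * signed_slope \<gamma> (- y i) * b * (x i \<bullet> du))"
      unfolding u b_def by (simp add: inner_sum_left sum_distrib_left algebra_simps)
    moreover have "lam i * signed_slope \<gamma> (y i) * a * (x i \<bullet> dv)
        + lam i * signed_slope \<gamma> (- y i) * b * (x i \<bullet> du) = lam i * G i dv du" for i
      using y[of i] unfolding G_def signed_slope_def by (auto simp: algebra_simps inner_commute)
    ultimately show ?thesis by (simp add: sum.distrib[symmetric])
  qed
  have feasible: "cvx_feasible m1 m2 \<gamma> x y v u" using feasible_iff active by simp
  have growth: "cvx_obj m1 m2 v u + real m1 / 2 * (norm (v' - v))^2 + real m2 / 2 * (norm (u' - u))^2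
      \<le> cvx_obj m1 m2 v' u'" if "cvx_feasible m1 m2 \<gamma> x y v' u'" for v' u'
  proof -
    have "0 \<le> lam i * G i (v' - v) (u' - u)" for i
    proof -
      have "1 \<le> G i v' u'" using that feasible_iff by blast
      then have "0 \<le> G i (v' - v) (u' - u)" using G_diff[of i v' u' v u] active[of i] by simp
      then show ?thesis using lam[of i] by simp
    qed
    then have "0 \<le> real m1 * (v \<bullet> (v' - v)) + real m2 * (u \<bullet> (u' - u))"
      unfolding stationary by (rule sum_nonneg)
    moreover have "(norm p')^2 = (norm p)^2 + 2 * (p \<bullet> (p' - p)) + (norm (p' - p))^2" for p p' :: "real^'d"
      by (simp add: power2_norm_eq_inner inner_diff_left inner_diff_right inner_commute)
    note expand = this[of v' v] this[of u' u]
    ultimately show ?thesis unfolding cvx_obj_def expand by (simp add: algebra_simps)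
  qed
  show "cvx_global_opt m1 m2 \<gamma> x y v u"
    unfolding cvx_global_opt_def using feasible growth
    by (smt (verit) zero_le_power2 of_nat_0_le_iff divide_nonneg_pos mult_nonneg_nonneg zero_less_numeral)
  assume "cvx_global_opt m1 m2 \<gamma> x y v' u'"
  then have "cvx_feasible m1 m2 \<gamma> x y v' u'" "cvx_obj m1 m2 v' u' \<le> cvx_obj m1 m2 v u"
    using feasible unfolding cvx_global_opt_def by auto
  moreover have "0 \<le> real m1 / 2 * (norm (v' - v))^2" "0 \<le> real m2 / 2 * (norm (u' - u))^2"
    by simp_all
  ultimately have "real m1 / 2 * (norm (v' - v))^2 = 0" "real m2 / 2 * (norm (u' - u))^2 = 0"
    using growth[of v' u'] by linarith+
  then show "v' = v \<and> u' = u" using m by simp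
qed

text \<open>Rescaling a linear separator gives a feasible point of the convex problem: \<open>t\<close> must
  make up for the smaller of the two effective widths \<open>\<surd>m\<^sub>1 + \<gamma> \<surd>m\<^sub>2\<close> and
  \<open>\<surd>m\<^sub>2 + \<gamma> \<surd>m\<^sub>1\<close>.\<close>
lemma cvx_feasible_scaled_separator:
  fixes zs :: "real^'d" and x :: "'n \<Rightarrow> real^'d" and m1 m2 :: nat
  assumes m: "0 < m1" "0 < m2" and y: "\<And>i. y i = 1 \<or> y i = -1" and zs: "\<And>i. 1 \<le> y i * (zs \<bullet> x i)"
    and t: "sqrt (real (m1 + m2)) \<le> t * (sqrt (real m1) + \<gamma> * sqrt (real m2))"
      "sqrt (real (m1 + m2)) \<le> t * (sqrt (real m2) + \<gamma> * sqrt (real m1))"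
  shows "cvx_feasible m1 m2 \<gamma> x y ((t / sqrt (real m1)) *\<^sub>R zs) ((- (t / sqrt (real m2))) *\<^sub>R zs)"
proof -
  define M where "M = sqrt (real (m1 + m2))"
  define p where "p = sqrt (real m1)"
  define q where "q = sqrt (real m2)"
  have M: "0 < M" unfolding M_def using m by simp
  have p: "real m1 = p * p" "0 < p" and q: "real m2 = q * q" "0 < q"
    unfolding p_def q_def using m by simp_all
  have "1 \<le> t * (p + \<gamma> * q) / M" "1 \<le> t * (q + \<gamma> * p) / M"
    using t M unfolding M_def[symmetric] p_def[symmetric] q_def[symmetric] by (simp_all add: le_divide_eq)
  note widths = this
  have pos: "1 * 1 \<le> t * (p + \<gamma> * q) / M * (zs \<bullet> x i)" if "y i = 1" for i
    using widths(1) zs[of i] that by (intro mult_mono) auto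
  have neg: "1 * 1 \<le> t * (q + \<gamma> * p) / M * (- (zs \<bullet> x i))" if "y i = -1" for i
    using widths(2) zs[of i] that by (intro mult_mono) auto
  show ?thesis
    unfolding cvx_feasible_def M_def[symmetric] p_def[symmetric] q_def[symmetric] p(1) q(1)
    using pos neg p(2) q(2) M by (auto simp: field_simps)
qed

lemma cvx_obj_scaled:
  assumes "0 < m1" "0 < m2"
  shows "cvx_obj m1 m2 ((t / sqrt (real m1)) *\<^sub>R z) ((- (t / sqrt (real m2))) *\<^sub>R z) = t^2 * (norm z)^2"
proof -
  have "real m1 * (t / sqrt (real m1))^2 = t^2" "real m2 * (t / sqrt (real m2))^2 = t^2"
    using assms by (simp_all add: power_divide)
  then show ?thesis
    unfolding cvx_obj_def norm_scaleR power_mult_distrib power2_abs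
    by (metis (no_types, lifting) add_divide_distrib mult.assoc power2_minus times_divide_eq_left
        field_sum_of_halves)
qed

lemma norm_zvec_sq_le:
  assumes "0 < m1 + m2"
  shows "(norm (zvec m1 m2 v u))^2 \<le> real m1 * (norm v)^2 + real m2 * (norm u)^2"
proof -
  define M where "M = sqrt (real (m1 + m2))"
  have "0 < real (m1 + m2)" using assms by (simp only: of_nat_0_less_iff)
  then have M: "0 < M" "M^2 = real m1 + real m2" unfolding M_def by simp_all
  have "norm (zvec m1 m2 v u) \<le> (real m1 * norm v + real m2 * norm u) / M"
    unfolding zvec_def M_def[symmetric]
    using norm_triangle_ineq4[of "(real m1 / M) *\<^sub>R v" "(real m2 / M) *\<^sub>R u"] M
    by (simp add: add_divide_distrib)
  then have "(norm (zvec m1 m2 v u))^2 \<le> ((real m1 * norm v + real m2 * norm u) / M)^2"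
    by (intro power_mono) auto
  also have "\<dots> = (real m1 * norm v + real m2 * norm u)^2 / M^2" by (rule power_divide)
  also have "\<dots> \<le> real m1 * (norm v)^2 + real m2 * (norm u)^2"
  proof -
    have "(real m1 + real m2) * (real m1 * (norm v)^2 + real m2 * (norm u)^2)
        - (real m1 * norm v + real m2 * norm u)^2 = real m1 * real m2 * (norm v - norm u)^2"
      by (simp add: power2_eq_square algebra_simps)
    moreover have "0 \<le> real m1 * real m2 * (norm v - norm u)^2" by simp
    ultimately have "(real m1 * norm v + real m2 * norm u)^2
        \<le> (real m1 + real m2) * (real m1 * (norm v)^2 + real m2 * (norm u)^2)" by linarith
    then show ?thesis using M by (simp add: divide_le_eq mult.commute)
  qed
  finally show ?thesis .
qed

lemma width_ratio_bound:
  fixes p q \<gamma> :: real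
  assumes pq: "0 < q" "q \<le> p" and g: "0 < \<gamma>" "\<gamma> < 1"
  shows "2 * (p^2 + q^2) / (min (p + \<gamma>*q) (q + \<gamma>*p))^2 \<le> (2 / (q/p + \<gamma>))^2"
proof -
  have p: "0 < p" using pq by linarith
  have "(p + \<gamma>*q) - (q + \<gamma>*p) = (1 - \<gamma>) * (p - q)" by (simp add: algebra_simps)
  also have "\<dots> \<ge> 0" using pq g by simp
  finally have min_eq: "min (p + \<gamma>*q) (q + \<gamma>*p) = q + \<gamma>*p" by simp
  have "2 / (q/p + \<gamma>) = 2*p / (q + \<gamma>*p)" using p by (simp add: field_simps)
  moreover have "2 * (p^2 + q^2) \<le> (2*p)^2" using pq p by (simp add: power2_eq_square mult_mono)
  then have "2 * (p^2 + q^2) / (q + \<gamma>*p)^2 \<le> (2*p)^2 / (q + \<gamma>*p)^2"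
    by (intro divide_right_mono) auto
  ultimately show ?thesis unfolding min_eq by (simp add: power_divide)
qed

text \<open>Comparison with the minimum-norm separator \<open>z\<^sup>*\<close>: a rescaled copy of \<open>z\<^sup>*\<close> is feasible
  for the convex problem, so the optimum costs at most \<open>t\<^sup>2 |z\<^sup>*|\<^sup>2\<close>.\<close>
lemma norm_zvec_le_separator:
  fixes v u zs :: "real^'d" and x :: "'n::finite \<Rightarrow> real^'d" and m1 m2 :: nat
  assumes m: "0 < m1" "0 < m2" and g: "0 < \<gamma>" "\<gamma> < 1" and y: "\<And>i. y i = 1 \<or> y i = -1"
    and opt: "cvx_global_opt m1 m2 \<gamma> x y v u" and zs: "\<And>i. 1 \<le> y i * (zs \<bullet> x i)"
  shows "norm (zvec m1 m2 v u) \<le> 2 / (sqrt (real (min m1 m2) / real (max m1 m2)) + \<gamma>) * norm zs"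
proof -
  define p where "p = sqrt (real m1)"
  define q where "q = sqrt (real m2)"
  define \<mu> where "\<mu> = min (p + \<gamma>*q) (q + \<gamma>*p)"
  define t where "t = sqrt (real (m1 + m2)) / \<mu>"
  have pq: "0 < p" "0 < q" unfolding p_def q_def using m by simp_all
  have "0 < \<mu>" unfolding \<mu>_def using pq g by (simp add: add_pos_pos)
  have "sqrt (real (m1 + m2)) * \<mu> \<le> sqrt (real (m1 + m2)) * (p + \<gamma> * q)"
    "sqrt (real (m1 + m2)) * \<mu> \<le> sqrt (real (m1 + m2)) * (q + \<gamma> * p)"
    unfolding \<mu>_def by (simp_all add: mult_left_mono)
  then have "sqrt (real (m1 + m2)) \<le> t * (p + \<gamma> * q)" "sqrt (real (m1 + m2)) \<le> t * (q + \<gamma> * p)"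
    unfolding t_def using \<open>0 < \<mu>\<close> by (simp_all add: field_simps)
  then have "cvx_feasible m1 m2 \<gamma> x y ((t / p) *\<^sub>R zs) ((- (t / q)) *\<^sub>R zs)"
    unfolding p_def q_def by (rule cvx_feasible_scaled_separator[OF m y zs])
  then have "cvx_obj m1 m2 v u \<le> cvx_obj m1 m2 ((t / p) *\<^sub>R zs) ((- (t / q)) *\<^sub>R zs)"
    using opt unfolding cvx_global_opt_def by blast
  also have "\<dots> = t^2 * (norm zs)^2"
    unfolding p_def q_def by (rule cvx_obj_scaled[OF m])
  finally have "cvx_obj m1 m2 v u \<le> t^2 * (norm zs)^2" .
  then have zvec_le: "(norm (zvec m1 m2 v u))^2 \<le> 2 * t^2 * (norm zs)^2"
    using norm_zvec_sq_le[of m1 m2 v u] m unfolding cvx_obj_def by simp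
  have "2 * t^2 \<le> (2 / (sqrt (real (min m1 m2) / real (max m1 m2)) + \<gamma>))^2"
  proof (cases "m2 \<le> m1")
    case True
    then have "sqrt (real (min m1 m2) / real (max m1 m2)) = q / p" "q \<le> p"
      unfolding p_def q_def by (simp_all add: min_def max_def real_sqrt_divide)
    moreover have "2 * t^2 = 2 * (p^2 + q^2) / \<mu>^2"
      unfolding t_def using pq by (simp add: power_divide p_def q_def)
    ultimately show ?thesis using width_ratio_bound[OF pq(2) _ g, of p] unfolding \<mu>_def by simp
  next
    case False
    then have "sqrt (real (min m1 m2) / real (max m1 m2)) = p / q" "p \<le> q"
      unfolding p_def q_def by (simp_all add: min_def max_def real_sqrt_divide)
    moreover have "2 * t^2 = 2 * (q^2 + p^2) / (min (q + \<gamma>*p) (p + \<gamma>*q))^2"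
      unfolding t_def \<mu>_def using pq by (simp add: power_divide p_def q_def min.commute add.commute)
    ultimately show ?thesis using width_ratio_bound[OF pq(1) _ g, of q] by simp
  qed
  then have "2 * t^2 * (norm zs)^2 \<le> (2 / (sqrt (real (min m1 m2) / real (max m1 m2)) + \<gamma>))^2 * (norm zs)^2"
    by (rule mult_right_mono) simp
  with zvec_le have "(norm (zvec m1 m2 v u))^2
      \<le> (2 / (sqrt (real (min m1 m2) / real (max m1 m2)) + \<gamma>) * norm zs)^2"
    unfolding power_mult_distrib by (rule order_trans)
  then show ?thesis
    by (rule power2_le_imp_le) (use g in simp)
qed

lemma sum_signed_slope_split:
  fixes x :: "'n::finite \<Rightarrow> 'a::real_vector"
  assumes y: "\<And>i. y i = 1 \<or> y i = -1"
  shows "(\<Sum>i\<in>UNIV. (lam i * signed_slope \<gamma> (y i)) *\<^sub>R x i)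
     = (\<Sum>i | y i = 1. lam i *\<^sub>R x i) - \<gamma> *\<^sub>R (\<Sum>i | y i = -1. lam i *\<^sub>R x i)"
proof -
  have "(\<Sum>i\<in>UNIV. (lam i * signed_slope \<gamma> (y i)) *\<^sub>R x i)
      = (\<Sum>i\<in>UNIV. if y i = 1 then lam i *\<^sub>R x i else (- \<gamma>) *\<^sub>R (lam i *\<^sub>R x i))"
    by (intro sum.cong refl) (simp add: signed_slope_def)
  also have "\<dots> = (\<Sum>i | y i = 1. lam i *\<^sub>R x i) + (\<Sum>i\<in>UNIV \<inter> - {i. y i = 1}. (- \<gamma>) *\<^sub>R (lam i *\<^sub>R x i))"
    by (simp add: sum.If_cases)
  also have "UNIV \<inter> - {i. y i = 1} = {i. y i = -1}" using y by force
  finally show ?thesis by (simp add: scaleR_sum_right sum_negf)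
qed

context kkt_multipliers
begin

definition v :: "real^'d" where
  "v = c *\<^sub>R (\<Sum>i\<in>UNIV. (lam i * signed_slope \<gamma> (y i)) *\<^sub>R x i)"

definition u :: "real^'d" where
  "u = c *\<^sub>R (\<Sum>i\<in>UNIV. (lam i * signed_slope \<gamma> (- y i)) *\<^sub>R x i)"

lemma fst_rows_eq: "fst W $ j = v"
  unfolding v_def by (rule row_representation_eq_signed_slope[OF fst_rows row_signs(1) label])

lemma snd_rows_eq: "snd W $ k = u"
  unfolding u_def using row_representation_eq_signed_slope[OF snd_rows row_signs(2) neg_label] .

lemma v_sign: "0 < y i * (v \<bullet> x i)"
  using row_signs(1) unfolding fst_rows_eq .

lemma u_sign: "y i * (u \<bullet> x i) < 0"
  using row_signs(2)[of i] unfolding snd_rows_eq by simp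

lemma v_eq_class_sums:
  "v = (1 / sqrt (real (CARD('m1) + CARD('m2)))) *\<^sub>R (\<Sum>i | y i = 1. lam i *\<^sub>R x i)
     - (\<gamma> / sqrt (real (CARD('m1) + CARD('m2)))) *\<^sub>R (\<Sum>i | y i = -1. lam i *\<^sub>R x i)"
  unfolding v_def by (simp add: sum_signed_slope_split[OF label] scale_eq scaleR_diff_right)

lemma u_eq_class_sums:
  "u = (1 / sqrt (real (CARD('m1) + CARD('m2)))) *\<^sub>R (\<Sum>i | y i = -1. lam i *\<^sub>R x i)
     - (\<gamma> / sqrt (real (CARD('m1) + CARD('m2)))) *\<^sub>R (\<Sum>i | y i = 1. lam i *\<^sub>R x i)"
proof -
  have "{i. - y i = 1} = {i. y i = -1}" "{i. - y i = -1} = {i. y i = 1}" by auto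
  then show ?thesis
    unfolding u_def by (simp add: sum_signed_slope_split[OF neg_label] scale_eq scaleR_diff_right)
qed

lemma net_eq:
  "net \<gamma> W \<xi> = real CARD('m1) / sqrt (real (CARD('m1) + CARD('m2))) * leaky \<gamma> (v \<bullet> \<xi>)
     - real CARD('m2) / sqrt (real (CARD('m1) + CARD('m2))) * leaky \<gamma> (u \<bullet> \<xi>)"
  unfolding net_def fst_rows_eq snd_rows_eq by simp

lemma active_constraints:
  defines "M1 \<equiv> real CARD('m1) / sqrt (real (CARD('m1) + CARD('m2)))"
    and "M2 \<equiv> real CARD('m2) / sqrt (real (CARD('m1) + CARD('m2)))"
  shows "y i = 1 \<Longrightarrow> M1 * (v \<bullet> x i) - \<gamma> * M2 * (u \<bullet> x i) = 1"
    and "y i = -1 \<Longrightarrow> M2 * (u \<bullet> x i) - \<gamma> * M1 * (v \<bullet> x i) = 1"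
  using tight[of i] v_sign[of i] u_sign[of i] gamma_lt_1
  by (auto simp: net_eq M1_def M2_def leaky_nonneg leaky_nonpos algebra_simps)

lemma row_lagrangian_minimizers:
  "row_lagrangian c \<gamma> lam y x v \<le> row_lagrangian c \<gamma> lam y x w"
  "row_lagrangian c \<gamma> lam y x w = row_lagrangian c \<gamma> lam y x v \<Longrightarrow> w = v"
  "row_lagrangian c \<gamma> lam (\<lambda>i. - y i) x u \<le> row_lagrangian c \<gamma> lam (\<lambda>i. - y i) x w"
  "row_lagrangian c \<gamma> lam (\<lambda>i. - y i) x w = row_lagrangian c \<gamma> lam (\<lambda>i. - y i) x u \<Longrightarrow> w = u"
proof -
  define D where "D = coupling / real CARD('n)"
  have X: "\<And>i j. i \<noteq> j \<Longrightarrow> \<bar>x i \<bullet> x j\<bar> \<le> D"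
    unfolding D_def coupling_def using data_hyp_inner_le[OF data gamma_pos] by simp
  have nD: "real CARD('n) * D = coupling" unfolding D_def by simp
  have N: "Rmin x^2 \<le> x i \<bullet> x i" for i
    unfolding power2_norm_eq_inner[symmetric] using Rmin_le_norm Rmin_pos by (intro power_mono) auto
  have key: "2 * lam_max * (real CARD('n) * D) < (1 + \<gamma>) * lam i * Rmin x^2" for i
  proof -
    have "2 * lam_max * coupling < 2 * \<gamma> * (1 / (2 * Rmax x^2)) * Rmin x^2"
      using lam_max_coupling_lt by simp
    also have "\<dots> \<le> (1 + \<gamma>) * (1 / (2 * Rmax x^2)) * Rmin x^2"
      using gamma_lt_1 by (intro mult_right_mono) auto
    also have "\<dots> < (1 + \<gamma>) * lam i * Rmin x^2"
      using lam_gt[of i] gamma_pos Rmin_pos by (intro mult_strict_right_mono mult_strict_left_mono) auto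
    finally show ?thesis unfolding nD .
  qed
  have "0 \<le> D" unfolding D_def using coupling_nonneg by simp
  note min = row_lagrangian_min[where x=x and lam=lam and Lm=lam_max and D=D and Rn="Rmin x",
      OF gamma_pos gamma_lt_1 scale_pos _ lam_pos lam_le_max X this N key]
  show "row_lagrangian c \<gamma> lam y x v \<le> row_lagrangian c \<gamma> lam y x w"
    "row_lagrangian c \<gamma> lam y x w = row_lagrangian c \<gamma> lam y x v \<Longrightarrow> w = v"
    using min[where s=y and w=w, OF label, folded v_def]
      row_lagrangian_at_critical[OF v_def v_sign label less_imp_le[OF gamma_lt_1]] by auto
  show "row_lagrangian c \<gamma> lam (\<lambda>i. - y i) x u \<le> row_lagrangian c \<gamma> lam (\<lambda>i. - y i) x w"
    "row_lagrangian c \<gamma> lam (\<lambda>i. - y i) x w = row_lagrangian c \<gamma> lam (\<lambda>i. - y i) x u \<Longrightarrow> w = u"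
    using min[where s="\<lambda>i. - y i" and w=w, OF neg_label, folded u_def] u_sign
      row_lagrangian_at_critical[OF u_def _ neg_label less_imp_le[OF gamma_lt_1]] by auto
qed

lemma P_global_opt: "P_global_opt \<gamma> x y W"
  and P_global_opt_unique: "P_global_opt \<gamma> x y W' \<Longrightarrow> W' = W"
  using P_global_opt_of_row_minimizers[where x=x and y=y and lam=lam and \<gamma>=\<gamma> and W=W,
      folded scale_eq, OF lam_nonneg tight fst_rows_eq snd_rows_eq row_lagrangian_minimizers]
  by blast+

lemma cvx_global_opt: "cvx_global_opt CARD('m1) CARD('m2) \<gamma> x y v u"
  and cvx_global_opt_unique:
    "cvx_global_opt CARD('m1) CARD('m2) \<gamma> x y v' u' \<Longrightarrow> v' = v \<and> u' = u"
proof -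
  have "v = (1 / sqrt (real (CARD('m1) + CARD('m2)))) *\<^sub>R
      (\<Sum>i\<in>UNIV. (lam i * signed_slope \<gamma> (y i)) *\<^sub>R x i)"
    "u = (1 / sqrt (real (CARD('m1) + CARD('m2)))) *\<^sub>R
      (\<Sum>i\<in>UNIV. (lam i * signed_slope \<gamma> (- y i)) *\<^sub>R x i)"
    unfolding v_def u_def by (simp_all add: scale_eq)
  note opt = cvx_global_opt_of_multipliers[OF _ _ label lam_nonneg this active_constraints]
  show "cvx_global_opt CARD('m1) CARD('m2) \<gamma> x y v u" by (rule opt(1)) simp_all
  show "cvx_global_opt CARD('m1) CARD('m2) \<gamma> x y v' u' \<Longrightarrow> v' = v \<and> u' = u"
    by (rule opt(2)) simp_all
qed

lemma zvec_inner:
  "zvec CARD('m1) CARD('m2) v u \<bullet> \<xi>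
     = real CARD('m1) / sqrt (real (CARD('m1) + CARD('m2))) * (v \<bullet> \<xi>)
     - real CARD('m2) / sqrt (real (CARD('m1) + CARD('m2))) * (u \<bullet> \<xi>)"
  unfolding zvec_def by (simp add: inner_diff_left)

lemma sign_net_eq_sign_zvec: "sign (net \<gamma> W \<xi>) = sign (zvec CARD('m1) CARD('m2) v u \<bullet> \<xi>)"
  unfolding net_eq zvec_inner by (rule sign_diff_leaky) (simp_all add: gamma_pos gamma_lt_1 add_pos_pos)

text \<open>Since \<open>\<gamma> < 1\<close>, the linear predictor \<open>z\<close> over-counts the unit of the wrong sign, so its
  margins dominate the (unit) margins of the network.\<close>
lemma zvec_margin: "1 \<le> y i * (zvec CARD('m1) CARD('m2) v u \<bullet> x i)"
proof -
  define M1 where "M1 = real CARD('m1) / sqrt (real (CARD('m1) + CARD('m2)))"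
  define M2 where "M2 = real CARD('m2) / sqrt (real (CARD('m1) + CARD('m2)))"
  have "0 < M1" "0 < M2" unfolding M1_def M2_def by (simp_all add: add_pos_pos)
  show ?thesis
  proof (cases "y i = 1")
    case True
    then have "(1 - \<gamma>) * M2 * (u \<bullet> x i) \<le> 0"
      using u_sign[of i] gamma_lt_1 \<open>0 < M2\<close> by (simp add: mult_nonneg_nonpos)
    then show ?thesis
      using active_constraints(1)[OF True] True unfolding zvec_inner M1_def[symmetric] M2_def[symmetric]
      by (simp add: algebra_simps)
  next
    case False
    then have "y i = -1" using label[of i] by auto
    then have "(1 - \<gamma>) * M1 * (v \<bullet> x i) \<le> 0"
      using v_sign[of i] gamma_lt_1 \<open>0 < M1\<close> by (simp add: mult_nonneg_nonpos)
    then show ?thesis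
      using active_constraints(2)[OF \<open>y i = -1\<close>] \<open>y i = -1\<close>
      unfolding zvec_inner M1_def[symmetric] M2_def[symmetric] by (simp add: algebra_simps)
  qed
qed

end

lemma leaky_inner_has_derivative:
  assumes "r W \<bullet> \<xi> \<noteq> 0" "\<gamma> \<le> 1" and "bounded_linear r"
  shows "((\<lambda>W. leaky \<gamma> (r W \<bullet> \<xi>)) has_derivative (\<lambda>h. leaky_slope \<gamma> (r W \<bullet> \<xi>) * (r h \<bullet> \<xi>))) (at W)"
proof -
  have "bounded_linear (\<lambda>W. r W \<bullet> \<xi>)"
    using assms(3) by (rule bounded_linear_compose[OF bounded_linear_inner_left])
  then have "((\<lambda>W. r W \<bullet> \<xi>) has_derivative (\<lambda>h. r h \<bullet> \<xi>)) (at W)"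
    by (rule bounded_linear_imp_has_derivative)
  moreover have "(leaky \<gamma> has_derivative (\<lambda>t. leaky_slope \<gamma> (r W \<bullet> \<xi>) * t)) (at (r W \<bullet> \<xi>))"
    using leaky_has_real_derivative[OF assms(1,2)] by (simp add: has_field_derivative_def)
  ultimately show ?thesis by (rule has_derivative_compose)
qed

lemma P_cons_has_derivative:
  fixes W :: "(real^'d^'m1::finite) \<times> (real^'d^'m2::finite)" and x :: "'n \<Rightarrow> real^'d"
  defines "c \<equiv> 1 / sqrt (real (CARD('m1) + CARD('m2)))"
  assumes g: "\<gamma> \<le> 1" and nz: "\<And>j. fst W $ j \<bullet> x i \<noteq> 0" "\<And>k. snd W $ k \<bullet> x i \<noteq> 0"
  shows "(P_cons \<gamma> x y i has_derivative (\<lambda>h.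
      ((\<chi> j. (- y i * c * leaky_slope \<gamma> (fst W $ j \<bullet> x i)) *\<^sub>R x i),
       (\<chi> k. (y i * c * leaky_slope \<gamma> (snd W $ k \<bullet> x i)) *\<^sub>R x i)) \<bullet> h)) (at W)"
proof -
  have rows: "bounded_linear (\<lambda>W :: (real^'d^'m1) \<times> (real^'d^'m2). fst W $ j)"
    "bounded_linear (\<lambda>W :: (real^'d^'m1) \<times> (real^'d^'m2). snd W $ k)" for j k
    by (intro bounded_linear_compose[OF bounded_linear_vec_nth] bounded_linear_fst bounded_linear_snd)+
  have D: "(P_cons \<gamma> x y i has_derivative (\<lambda>h. 0 - y i *
      ((\<Sum>j\<in>UNIV. c * (leaky_slope \<gamma> (fst W $ j \<bullet> x i) * (fst h $ j \<bullet> x i)))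
     - (\<Sum>k\<in>UNIV. c * (leaky_slope \<gamma> (snd W $ k \<bullet> x i) * (snd h $ k \<bullet> x i)))))) (at W)"
    unfolding P_cons_def net_def c_def[symmetric]
    by (intro has_derivative_diff has_derivative_const has_derivative_mult_right has_derivative_sum
        leaky_inner_has_derivative[OF _ g] nz rows)
  have pair_inner: "((\<chi> j. a j *\<^sub>R x i), (\<chi> k. b k *\<^sub>R x i)) \<bullet> h
      = (\<Sum>j\<in>UNIV. a j * (fst h $ j \<bullet> x i)) + (\<Sum>k\<in>UNIV. b k * (snd h $ k \<bullet> x i))"
    for a b and h :: "(real^'d^'m1) \<times> (real^'d^'m2)"
  proof -
    have chi: "(\<chi> j. f j) \<bullet> A = (\<Sum>j\<in>UNIV. f j \<bullet> A $ j)" for f and A :: "real^'d^'m"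
      by (simp only: inner_vec_def vec_lambda_beta)
    show ?thesis by (simp add: inner_prod_def chi inner_commute[of "x i"])
  qed
  show ?thesis
    by (rule has_derivative_eq_rhs[OF D])
       (rule ext, unfold pair_inner, simp add: sum_distrib_left algebra_simps sum_negf)
qed

text \<open>Away from the kinks the Clarke subdifferentials are gradients, so the KKT conditions reduce
  to the stationarity equations.\<close>
lemma kkt_point_of_stationary_rows:
  fixes W :: "(real^'d^'m1::finite) \<times> (real^'d^'m2::finite)" and x :: "'n::finite \<Rightarrow> real^'d"
  defines "c \<equiv> 1 / sqrt (real (CARD('m1) + CARD('m2)))"
  assumes g: "\<gamma> \<le> 1" and rows: "\<And>j. fst W $ j = v" "\<And>k. snd W $ k = u"
    and nz: "\<And>i. v \<bullet> x i \<noteq> 0" "\<And>i. u \<bullet> x i \<noteq> 0"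
    and lam: "\<And>i. 0 \<le> lam i" and tight: "\<And>i. y i * net \<gamma> W (x i) = 1"
    and v: "v = c *\<^sub>R (\<Sum>i\<in>UNIV. (lam i * y i * leaky_slope \<gamma> (v \<bullet> x i)) *\<^sub>R x i)"
    and u: "u = - c *\<^sub>R (\<Sum>i\<in>UNIV. (lam i * y i * leaky_slope \<gamma> (u \<bullet> x i)) *\<^sub>R x i)"
  shows "kkt_point P_obj (P_cons \<gamma> x y) W"
proof -
  define B :: "'n \<Rightarrow> (real^'d^'m1) \<times> (real^'d^'m2)" where "B i = ((\<chi> j. (- y i * c * leaky_slope \<gamma> (v \<bullet> x i)) *\<^sub>R x i),
                         (\<chi> k. (y i * c * leaky_slope \<gamma> (u \<bullet> x i)) *\<^sub>R x i))" for i
  have B_grad: "B i \<in> clarke_subdiff (P_cons \<gamma> x y i) W" for i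
    using P_cons_has_derivative[OF g, of W x i y] nz unfolding rows B_def c_def
    by (intro gradient_in_clarke_subdiff) simp
  have W_grad: "W \<in> clarke_subdiff P_obj W"
    using clarke_subdiff_half_sqnorm[of W] by (simp add: P_obj_def[abs_def])
  have stationary: "0 = W + (\<Sum>i\<in>UNIV. lam i *\<^sub>R B i)"
  proof -
    have "v + (\<Sum>i\<in>UNIV. lam i *\<^sub>R (- y i * c * leaky_slope \<gamma> (v \<bullet> x i)) *\<^sub>R x i) = 0"
      by (subst (1) v) (simp add: scaleR_sum_right sum_negf algebra_simps)
    moreover have "u + (\<Sum>i\<in>UNIV. lam i *\<^sub>R (y i * c * leaky_slope \<gamma> (u \<bullet> x i)) *\<^sub>R x i) = 0"
      by (subst (1) u) (simp add: scaleR_sum_right sum_negf algebra_simps)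
    ultimately show ?thesis
      by (simp add: prod_eq_iff vec_eq_iff fst_sum snd_sum B_def rows)
  qed
  show ?thesis
    unfolding kkt_point_def
  proof (intro conjI exI[of _ lam] allI)
    fix i
    show "P_cons \<gamma> x y i W \<le> 0" "0 \<le> lam i" "lam i * P_cons \<gamma> x y i W = 0"
      using lam tight by (simp_all add: P_cons_def)
  next
    show "0 \<in> {a + (\<Sum>n\<in>UNIV. lam n *\<^sub>R b n) | a b.
        a \<in> clarke_subdiff P_obj W \<and> (\<forall>n. b n \<in> clarke_subdiff (P_cons \<gamma> x y n) W)}"
      using stationary W_grad B_grad by blast
  qed
qed

lemma kkt_point_max_margin:
  fixes z :: "'a::euclidean_space" and x :: "'n::finite \<Rightarrow> 'a"
  assumes "kkt_point (\<lambda>z. (1/2) * (norm z)^2) (\<lambda>i z. \<beta> - y i * (z \<bullet> x i)) z"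
  obtains \<mu> where "\<And>i. 0 \<le> \<mu> i" "\<And>i. \<mu> i * (\<beta> - y i * (z \<bullet> x i)) = 0"
    "z = (\<Sum>i\<in>UNIV. (\<mu> i * y i) *\<^sub>R x i)"
proof -
  from assms obtain \<mu> a b where \<mu>: "\<forall>i. 0 \<le> \<mu> i" "\<forall>i. \<mu> i * (\<beta> - y i * (z \<bullet> x i)) = 0"
    and a: "a \<in> clarke_subdiff (\<lambda>z. (1/2) * (norm z)^2) z"
    and b: "\<forall>i. b i \<in> clarke_subdiff (\<lambda>z. \<beta> - y i * (z \<bullet> x i)) z"
    and zero: "0 = a + (\<Sum>i\<in>UNIV. \<mu> i *\<^sub>R b i)"
    unfolding kkt_point_def by blast
  have "a = z" using a clarke_subdiff_half_sqnorm by auto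
  moreover have "b = (\<lambda>i. - y i *\<^sub>R x i)"
    using b clarke_subdiff_affine[of \<beta> _ _ z] by auto
  ultimately have "z = - (\<Sum>i\<in>UNIV. \<mu> i *\<^sub>R (- y i *\<^sub>R x i))"
    using zero by (simp add: eq_neg_iff_add_eq_0)
  then have "z = (\<Sum>i\<in>UNIV. (\<mu> i * y i) *\<^sub>R x i)"
    by (simp add: sum_negf[symmetric])
  with \<mu> that show ?thesis by blast
qed

section \<open>The predictor need not be max-margin\<close>

definition example_x :: "3 \<Rightarrow> real^3" where
  "example_x i = (if i = 1 then axis 1 1 else if i = 2 then axis 2 1
                  else axis 3 1 + (1/1000) *\<^sub>R axis 1 1)"

definition example_y :: "3 \<Rightarrow> real" where
  "example_y i = (if i = 3 then -1 else 1)"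

lemma example_y_simps [simp]: "example_y 1 = 1" "example_y 2 = 1" "example_y 3 = -1"
  by (simp_all add: example_y_def)

lemma example_gram [simp]:
  "example_x 1 \<bullet> example_x 1 = 1" "example_x 2 \<bullet> example_x 2 = 1"
  "example_x 3 \<bullet> example_x 3 = 1 + 1/1000000"
  "example_x 1 \<bullet> example_x 2 = 0" "example_x 2 \<bullet> example_x 1 = 0"
  "example_x 1 \<bullet> example_x 3 = 1/1000" "example_x 3 \<bullet> example_x 1 = 1/1000"
  "example_x 2 \<bullet> example_x 3 = 0" "example_x 3 \<bullet> example_x 2 = 0"
  by (simp_all add: example_x_def inner_axis_axis inner_add_left inner_add_right)

lemma example_norms: "range (\<lambda>i. norm (example_x i)) = {1, sqrt (1 + 1/1000000)}"
  unfolding UNIV_3 by (simp add: norm_eq_sqrt_inner)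

lemma example_data_hyp: "data_hyp (1/2) example_x example_y"
proof -
  define K where "K = 3 * (1 / (1/2::real)^3) * (Rmax example_x / Rmin example_x)^2 * real CARD(3)"
  have "Rmin example_x = 1" "Rmax example_x = sqrt (1 + 1/1000000)"
    unfolding Rmin_def Rmax_def example_norms by simp_all
  then have "0 \<le> K" "K * (1/1000) \<le> (Rmin example_x)^2"
    unfolding K_def by (simp_all add: power_divide)
  moreover have "\<bar>example_x i \<bullet> example_x j\<bar> \<le> 1/1000" if "i \<noteq> j" for i j
    using that exhaust_3[of i] exhaust_3[of j] by auto
  ultimately have "K * \<bar>example_x i \<bullet> example_x j\<bar> \<le> (Rmin example_x)^2" if "i \<noteq> j" for i j
    using that by (meson mult_left_mono order_trans)
  moreover have "example_x i \<bullet> example_x i \<noteq> 0" for i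
    using exhaust_3[of i] by (elim disjE; simp only: example_gram; simp)
  then have "example_x i \<noteq> 0" for i by (metis inner_zero_left)
  moreover have "example_y i = 1 \<or> example_y i = -1" for i by (simp add: example_y_def)
  ultimately show ?thesis unfolding data_hyp_def K_def by blast
qed

text \<open>The multipliers solve the stationarity equations for the rows
  \<open>p = \<lambda>\<^sub>1 x\<^sub>1 + \<lambda>\<^sub>2 x\<^sub>2 - \<lambda>\<^sub>3 x\<^sub>3 / 2\<close> and \<open>q = \<lambda>\<^sub>3 x\<^sub>3 - \<lambda>\<^sub>1 x\<^sub>1 / 2 - \<lambda>\<^sub>2 x\<^sub>2 / 2\<close>
  (scaled by \<open>1 / \<surd>m\<close>) with all three constraints active.\<close>
lemma example_kkt_point_exists:
  "\<exists>W :: (real^3^'k::finite) \<times> (real^3^'k). kkt_point P_obj (P_cons (1/2) example_x example_y) W"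
proof -
  define c where "c = 1 / sqrt (real (CARD('k) + CARD('k)))"
  have c: "0 < c" unfolding c_def by simp
  have Mc: "real CARD('k) / sqrt (real (CARD('k) + CARD('k))) * c = 1/2"
    unfolding c_def by (simp add: power2_eq_square[symmetric])
  define lam :: "3 \<Rightarrow> real" where
    "lam i = (if i = 1 then 40032040/25000009 else if i = 2 then 8/5 else 40032000/25000009)" for i
  define p where "p = lam 1 *\<^sub>R example_x 1 + lam 2 *\<^sub>R example_x 2 - (lam 3 / 2) *\<^sub>R example_x 3"
  define q where "q = lam 3 *\<^sub>R example_x 3 - (lam 1 / 2) *\<^sub>R example_x 1 - (lam 2 / 2) *\<^sub>R example_x 2"
  define W :: "(real^3^'k) \<times> (real^3^'k)" where "W = ((\<chi> j. c *\<^sub>R p), (\<chi> k. c *\<^sub>R q))"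
  have px: "0 < p \<bullet> example_x 1" "0 < p \<bullet> example_x 2" "p \<bullet> example_x 3 < 0"
    and qx: "q \<bullet> example_x 1 < 0" "q \<bullet> example_x 2 < 0" "0 < q \<bullet> example_x 3"
    unfolding p_def q_def lam_def by (simp_all add: inner_diff_left inner_add_left)
  have net: "net (1/2) W \<xi> = 1/2 * (leaky (1/2) (p \<bullet> \<xi>) - leaky (1/2) (q \<bullet> \<xi>))" for \<xi>
    unfolding net_def W_def using c Mc
    by (simp add: leaky_mult_pos right_diff_distrib mult.assoc[symmetric])
  have tight: "example_y i * net (1/2) W (example_x i) = 1" for i
    using exhaust_3[of i] px qx unfolding net
    by (auto simp: leaky_nonneg leaky_nonpos p_def q_def lam_def inner_diff_left inner_add_left)
  have slope_p: "leaky_slope (1/2) (c *\<^sub>R p \<bullet> example_x i) = (if i = 3 then 1/2 else 1)" for i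
    using exhaust_3[of i] px c by (auto simp: leaky_slope_def zero_less_mult_iff)
  have slope_q: "leaky_slope (1/2) (c *\<^sub>R q \<bullet> example_x i) = (if i = 3 then 1 else 1/2)" for i
    using exhaust_3[of i] qx c by (auto simp: leaky_slope_def zero_less_mult_iff)
  have nz: "c *\<^sub>R p \<bullet> example_x i \<noteq> 0" "c *\<^sub>R q \<bullet> example_x i \<noteq> 0" for i
    using exhaust_3[of i] px qx c by auto
  have v_eq: "c *\<^sub>R p = c *\<^sub>R (\<Sum>i\<in>UNIV.
      (lam i * example_y i * leaky_slope (1/2) (c *\<^sub>R p \<bullet> example_x i)) *\<^sub>R example_x i)"
    unfolding slope_p sum_3 by (simp add: p_def)
  have u_eq: "c *\<^sub>R q = - c *\<^sub>R (\<Sum>i\<in>UNIV.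
      (lam i * example_y i * leaky_slope (1/2) (c *\<^sub>R q \<bullet> example_x i)) *\<^sub>R example_x i)"
    unfolding slope_q sum_3 by (simp add: q_def algebra_simps)
  have "kkt_point P_obj (P_cons (1/2) example_x example_y) W"
    using kkt_point_of_stationary_rows[where v="c *\<^sub>R p" and u="c *\<^sub>R q" and lam=lam and W=W,
        folded c_def, OF _ _ _ nz _ tight v_eq u_eq]
    by (simp add: W_def lam_def)
  then show ?thesis by blast
qed

text \<open>The max-margin multipliers are proportional to \<open>l\<close>, so the constraints of \<open>x\<^sub>1\<close> and
  \<open>x\<^sub>2\<close> are both active.\<close>
lemma example_max_margin_balance:
  fixes z :: "real^3" and l :: "3 \<Rightarrow> real"
  assumes KZ: "kkt_point (\<lambda>z. (1/2) * (norm z)^2) (\<lambda>i z. \<beta> - example_y i * (z \<bullet> example_x i)) z"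
    and z_eq: "z = K *\<^sub>R (l 1 *\<^sub>R example_x 1 + l 2 *\<^sub>R example_x 2 - l 3 *\<^sub>R example_x 3)"
    and K: "0 < K" and l: "\<And>i. 0 < l i"
  shows "l 1 - l 3 / 1000 = l 2"
proof -
  define x1 x2 x3 where "x1 = example_x 1" and "x2 = example_x 2" and "x3 = example_x 3"
  obtain \<mu> where "\<And>i. 0 \<le> \<mu> i" and \<mu>: "\<And>i. \<mu> i * (\<beta> - example_y i * (z \<bullet> example_x i)) = 0"
    and z_\<mu>: "z = (\<Sum>i\<in>UNIV. (\<mu> i * example_y i) *\<^sub>R example_x i)"
    using KZ by (rule kkt_point_max_margin) blast
  have axes: "axis 1 1 \<bullet> x1 = 1" "axis 1 1 \<bullet> x2 = 0" "axis 1 1 \<bullet> x3 = 1/1000"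
    "axis 2 1 \<bullet> x1 = 0" "axis 2 1 \<bullet> x2 = 1" "axis 2 1 \<bullet> x3 = 0"
    "axis 3 1 \<bullet> x1 = 0" "axis 3 1 \<bullet> x2 = 0" "axis 3 1 \<bullet> x3 = 1"
    unfolding x1_def x2_def x3_def example_x_def by (simp_all add: inner_axis_axis inner_add_right)
  have proj: "axis k 1 \<bullet> z = axis k 1 \<bullet> (\<mu> 1 *\<^sub>R x1 + \<mu> 2 *\<^sub>R x2 - \<mu> 3 *\<^sub>R x3)" for k
    unfolding z_\<mu> sum_3 x1_def x2_def x3_def by (simp add: algebra_simps)
  have \<mu>_eq: "\<mu> i = K * l i" for i
    using exhaust_3[of i] proj[of 1] proj[of 2] proj[of 3] unfolding z_eq x1_def[symmetric]
      x2_def[symmetric] x3_def[symmetric]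
    by (auto simp: inner_add_right inner_diff_right axes algebra_simps)
  have "0 < \<mu> i" for i unfolding \<mu>_eq using l[of i] K by simp
  then have "z \<bullet> example_x i = \<beta>" if "i \<noteq> 3" for i
    using \<mu>[of i] that by (simp add: example_y_def) (metis less_irrefl)
  then have "z \<bullet> x1 = z \<bullet> x2" unfolding x1_def x2_def by simp
  moreover have "z \<bullet> x1 = K * (l 1 - l 3 / 1000)" "z \<bullet> x2 = K * l 2"
    unfolding z_eq x1_def x2_def x3_def
    by (simp_all add: inner_diff_left inner_add_left; simp add: field_simps)+
  ultimately show ?thesis using K by simp
qed

text \<open>At every KKT point of (P) the margins of \<open>x\<^sub>1\<close> and \<open>x\<^sub>2\<close> under \<open>v - u/2\<close> agree, which ties
  \<open>\<lambda>\<^sub>1, \<lambda>\<^sub>2, \<lambda>\<^sub>3\<close> together with weight \<open>5/4\<close> instead of \<open>1\<close>; both relations force \<open>\<lambda>\<^sub>3 = 0\<close>.\<close>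
lemma example_not_max_margin:
  fixes W :: "(real^3^'k::finite) \<times> (real^3^'k)"
  assumes "kkt_point P_obj (P_cons (1/2) example_x example_y) W \<and>
      (\<forall>j. fst W $ j = v') \<and> (\<forall>k. snd W $ k = u')"
  shows "\<not> kkt_point (\<lambda>z. (1/2) * (norm z)^2) (\<lambda>i z. \<beta> - example_y i * (z \<bullet> example_x i))
           (zvec CARD('k) CARD('k) v' u')"
proof
  from assms have K: "kkt_point P_obj (P_cons (1/2) example_x example_y) W"
    and rows: "\<And>j. fst W $ j = v'" "\<And>k. snd W $ k = u'" by auto
  define c where "c = 1 / sqrt (real (CARD('k) + CARD('k)))"
  define M where "M = real CARD('k) / sqrt (real (CARD('k) + CARD('k)))"
  have "0 < c" "0 < M" unfolding c_def M_def by simp_all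
  obtain lam where "kkt_multipliers (1/2) example_x example_y W lam c"
    using kkt_multipliers_exist[of "1/2" example_x example_y W] K example_data_hyp
    unfolding c_def by auto
  then interpret kkt_multipliers "1/2" example_x example_y W lam c .
  have "v' = v" "u' = u" using rows fst_rows_eq snd_rows_eq by metis+
  define x1 x2 x3 where "x1 = example_x 1" and "x2 = example_x 2" and "x3 = example_x 3"
  have v_eq: "v = c *\<^sub>R (lam 1 *\<^sub>R x1 + lam 2 *\<^sub>R x2 - (lam 3 / 2) *\<^sub>R x3)"
    and u_eq: "u = c *\<^sub>R (lam 3 *\<^sub>R x3 - (lam 1 / 2) *\<^sub>R x1 - (lam 2 / 2) *\<^sub>R x2)"
    unfolding v_def u_def sum_3 x1_def x2_def x3_def by (simp_all add: signed_slope_def algebra_simps)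
  have "M * ((v - (1/2) *\<^sub>R u) \<bullet> x1) = 1" "M * ((v - (1/2) *\<^sub>R u) \<bullet> x2) = 1"
    using active_constraints(1)[of 1] active_constraints(1)[of 2]
    unfolding M_def x1_def x2_def by (simp_all add: inner_diff_left algebra_simps)
  then have "(v - (1/2) *\<^sub>R u) \<bullet> x1 = (v - (1/2) *\<^sub>R u) \<bullet> x2"
    using \<open>0 < M\<close> by (metis mult_left_cancel less_irrefl)
  moreover have "(v - (1/2) *\<^sub>R u) \<bullet> x1 = c * ((5/4) * lam 1 - lam 3 / 1000)"
    "(v - (1/2) *\<^sub>R u) \<bullet> x2 = c * ((5/4) * lam 2)"
    unfolding v_eq u_eq x1_def x2_def x3_def
    by (simp_all add: inner_diff_left inner_add_left; simp add: field_simps)+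
  ultimately have balance: "(5/4) * lam 1 - lam 3 / 1000 = (5/4) * lam 2"
    using \<open>0 < c\<close> by simp
  have z_eq: "zvec CARD('k) CARD('k) v u
      = (M * c * 3/2) *\<^sub>R (lam 1 *\<^sub>R x1 + lam 2 *\<^sub>R x2 - lam 3 *\<^sub>R x3)"
    unfolding zvec_def v_eq u_eq M_def[symmetric] x1_def x2_def x3_def example_x_def
    by (simp add: vec_eq_iff forall_3 axis_def field_simps)
  assume "kkt_point (\<lambda>z. (1/2) * (norm z)^2) (\<lambda>i z. \<beta> - example_y i * (z \<bullet> example_x i))
      (zvec CARD('k) CARD('k) v' u')"
  then have "lam 1 - lam 3 / 1000 = lam 2"
    unfolding \<open>v' = v\<close> \<open>u' = u\<close>
    by (rule example_max_margin_balance[OF _ z_eq[unfolded x1_def x2_def x3_def]])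
       (use lam_pos \<open>0 < c\<close> \<open>0 < M\<close> in simp_all)
  with balance lam_pos[of 3] show False by simp
qed

lemma dim_span_two_rows_le:
  fixes W :: "(real^'d^'m1::finite) \<times> (real^'d^'m2::finite)"
  assumes "\<And>j. fst W $ j = v" "\<And>k. snd W $ k = u"
  shows "dim (span (range (\<lambda>j. fst W $ j) \<union> range (\<lambda>k. snd W $ k))) \<le> 2"
proof -
  have "range (\<lambda>j. fst W $ j) \<union> range (\<lambda>k. snd W $ k) = {v, u}" using assms by auto
  moreover have "dim {v, u} \<le> card {v, u}" by (rule dim_le_card') simp
  moreover have "card {v, u} \<le> 2" by (simp add: card_insert_if)
  ultimately show ?thesis by (simp add: dim_span)
qed

lemma kkt_point_structure:
  fixes x :: "'n::finite \<Rightarrow> real^'d" and W :: "(real^'d^'m1::finite) \<times> (real^'d^'m2::finite)"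
  assumes "0 < \<gamma> \<and> \<gamma> < 1 \<and> data_hyp \<gamma> x y \<and> kkt_point P_obj (P_cons \<gamma> x y) W"
  shows
      "(let m1 = CARD('m1); m2 = CARD('m2); m = m1 + m2 in
       (\<forall>i. y i * net \<gamma> W (x i) = 1) \<and>
       (\<exists>v u. (\<forall>j. fst W $ j = v) \<and> (\<forall>j. snd W $ j = u) \<and>
          dim (span (range (\<lambda>j. fst W $ j) \<union> range (\<lambda>j. snd W $ j))) \<le> 2 \<and>
          (\<exists>lam :: 'n \<Rightarrow> real.
             (\<forall>i. 1 / (2 * (Rmax x)^2) < lam i \<and> lam i < 3 / (2 * \<gamma>^2 * (Rmin x)^2)) \<and>
             v = (1 / sqrt (real m)) *\<^sub>R (\<Sum>i | y i = 1. lam i *\<^sub>R x i)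
                 - (\<gamma> / sqrt (real m)) *\<^sub>R (\<Sum>i | y i = -1. lam i *\<^sub>R x i) \<and>
             u = (1 / sqrt (real m)) *\<^sub>R (\<Sum>i | y i = -1. lam i *\<^sub>R x i)
                 - (\<gamma> / sqrt (real m)) *\<^sub>R (\<Sum>i | y i = 1. lam i *\<^sub>R x i)) \<and>
          (\<forall>i. y i * (v \<bullet> x i) > 0 \<and> y i * (u \<bullet> x i) < 0) \<and>
          P_global_opt \<gamma> x y W \<and> (\<forall>W'. P_global_opt \<gamma> x y W' \<longrightarrow> W' = W) \<and>
          cvx_global_opt m1 m2 \<gamma> x y v u \<and>
          (\<forall>v' u'. cvx_global_opt m1 m2 \<gamma> x y v' u' \<longrightarrow> v' = v \<and> u' = u) \<and>
          (\<forall>\<xi>. sign (net \<gamma> W \<xi>) = sign (zvec m1 m2 v u \<bullet> \<xi>)) \<and>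
          (\<forall>i. y i * (zvec m1 m2 v u \<bullet> x i) \<ge> 1) \<and>
          (\<forall>zs. minnorm_sep x y zs \<longrightarrow>
             norm (zvec m1 m2 v u)
               \<le> 2 / (sqrt (real (min m1 m2) / real (max m1 m2)) + \<gamma>) * norm zs)))"
proof -
  define c where "c = 1 / sqrt (real (CARD('m1) + CARD('m2)))"
  obtain lam where "kkt_multipliers \<gamma> x y W lam c"
    using kkt_multipliers_exist[OF assms] unfolding c_def .
  then interpret kkt_multipliers \<gamma> x y W lam c .
  have norm_bound: "norm (zvec CARD('m1) CARD('m2) v u)
      \<le> 2 / (sqrt (real (min CARD('m1) CARD('m2)) / real (max CARD('m1) CARD('m2))) + \<gamma>) * norm zs"
    if "minnorm_sep x y zs" for zs
    using that norm_zvec_le_separator[OF _ _ gamma_pos gamma_lt_1 label cvx_global_opt]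
    by (simp add: minnorm_sep_def)
  show ?thesis
    unfolding Let_def
    apply (intro conjI allI tight)
    apply (rule exI[of _ v], rule exI[of _ u])
    apply (intro conjI exI[of _ lam] allI impI)
    apply (simp_all only: fst_rows_eq snd_rows_eq dim_span_two_rows_le[OF fst_rows_eq snd_rows_eq]
        lam_gt lam_lt v_sign u_sign P_global_opt P_global_opt_unique
        cvx_global_opt cvx_global_opt_unique sign_net_eq_sign_zvec zvec_margin norm_bound)
    apply (fact v_eq_class_sums u_eq_class_sums)+
    done
qed

theorem mainTheorem1:
  shows
  "(\<forall>(\<gamma>::real) (x :: 'n::finite \<Rightarrow> real^'d) (y :: 'n \<Rightarrow> real)
       (W :: (real^'d^'m1::finite) \<times> (real^'d^'m2::finite)).
      0 < \<gamma> \<and> \<gamma> < 1 \<and> data_hyp \<gamma> x y \<and> kkt_point P_obj (P_cons \<gamma> x y) W \<longrightarrow>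
      (let m1 = CARD('m1); m2 = CARD('m2); m = m1 + m2 in
       (\<forall>i. y i * net \<gamma> W (x i) = 1) \<and>
       (\<exists>v u. (\<forall>j. fst W $ j = v) \<and> (\<forall>j. snd W $ j = u) \<and>
          dim (span (range (\<lambda>j. fst W $ j) \<union> range (\<lambda>j. snd W $ j))) \<le> 2 \<and>
          (\<exists>lam :: 'n \<Rightarrow> real.
             (\<forall>i. 1 / (2 * (Rmax x)^2) < lam i \<and> lam i < 3 / (2 * \<gamma>^2 * (Rmin x)^2)) \<and>
             v = (1 / sqrt (real m)) *\<^sub>R (\<Sum>i | y i = 1. lam i *\<^sub>R x i)
                 - (\<gamma> / sqrt (real m)) *\<^sub>R (\<Sum>i | y i = -1. lam i *\<^sub>R x i) \<and>
             u = (1 / sqrt (real m)) *\<^sub>R (\<Sum>i | y i = -1. lam i *\<^sub>R x i)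
                 - (\<gamma> / sqrt (real m)) *\<^sub>R (\<Sum>i | y i = 1. lam i *\<^sub>R x i)) \<and>
          (\<forall>i. y i * (v \<bullet> x i) > 0 \<and> y i * (u \<bullet> x i) < 0) \<and>
          P_global_opt \<gamma> x y W \<and> (\<forall>W'. P_global_opt \<gamma> x y W' \<longrightarrow> W' = W) \<and>
          cvx_global_opt m1 m2 \<gamma> x y v u \<and>
          (\<forall>v' u'. cvx_global_opt m1 m2 \<gamma> x y v' u' \<longrightarrow> v' = v \<and> u' = u) \<and>
          (\<forall>\<xi>. sign (net \<gamma> W \<xi>) = sign (zvec m1 m2 v u \<bullet> \<xi>)) \<and>
          (\<forall>i. y i * (zvec m1 m2 v u \<bullet> x i) \<ge> 1) \<and>
          (\<forall>zs. minnorm_sep x y zs \<longrightarrow>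
             norm (zvec m1 m2 v u)
               \<le> 2 / (sqrt (real (min m1 m2) / real (max m1 m2)) + \<gamma>) * norm zs))))
   \<and>
   (\<exists>(x :: 3 \<Rightarrow> real^3) (y :: 3 \<Rightarrow> real).
      data_hyp (1/2) x y \<and>
      (\<exists>W :: (real^3^'k::finite) \<times> (real^3^'k). kkt_point P_obj (P_cons (1/2) x y) W) \<and>
      (\<forall>(W :: (real^3^'k) \<times> (real^3^'k)) v u.
         kkt_point P_obj (P_cons (1/2) x y) W \<and> (\<forall>j. fst W $ j = v) \<and> (\<forall>j. snd W $ j = u) \<longrightarrow>
         (\<forall>\<beta>>0. \<not> kkt_point (\<lambda>z. (1/2) * (norm z)^2) (\<lambda>i z. \<beta> - y i * (z \<bullet> x i))
                      (zvec CARD('k) CARD('k) v u))))"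
  apply (rule conjI)
   apply (intro allI impI)
   apply (erule kkt_point_structure)
  apply (intro exI[of _ example_x] exI[of _ example_y] conjI allI impI example_data_hyp
      example_kkt_point_exists)
  apply (erule example_not_max_margin)
  done
end
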